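(* Let $D=2$, $C/2<K<C$, $U=rC$ and $\bar a=rK$ for a positive integer $r$, and let all user and creator types be drawn i.i.d. from the uniform distribution on $\{x\in\mathbb R^2_{\ge0}:\|x\|_2=1\}$. Let $X_1\le\dots\le X_C$ be the order statistics of $C$ i.i.d. $\mathrm{Uniform}(0,1)$ random variables. Then as $r\to\infty$ (with $C,K$ fixed), $$\Pr(\text{at least }K\text{ creators stay after }t=0\text{ under }UC_0)\to\sum_{i=2}^{C-K}\Pr\left(\frac{X_i+X_{K+i}}2\ge\frac KC\ \text{and}\ \frac{X_{i-1}+X_{K+i-1}}2\le1-\frac KC\right)+\Pr\left(\frac{X_1+X_{K+1}}2\ge\frac KC\right)+\Pr\left(\frac{X_{C-K}+X_C}2\le1-\frac KC\right).$$
   Context: Users $\mathcal U_0=\{1,\dots,U\}$, creators $\mathcal C_0=\{1,\dots,C\}$. At $t=0$ the user-centric recommendation assigns each user $i$ the set $UC_0(i)\in\arg\max_{S\subseteq\mathcal C_0,|S|\le K}\sum_{j\in S}u_i^Tc_j$. Creator $j$ stays after $t=0$ if $|\{i\in\mathcal U_0:j\in UC_0(i)\}|\ge\bar a$. *)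

theory Defs
  imports "HOL-Probability.Probability"
begin

definition unif01 :: "real measure" where
  "unif01 = uniform_measure lborel {0..1}"

definition arc_unif :: "(real \<times> real) measure" where
  "arc_unif = distr (uniform_measure lborel {0..pi/2}) borel (\<lambda>\<theta>. (cos \<theta>, sin \<theta>))"

definition is_UC :: "nat \<Rightarrow> nat \<Rightarrow> real \<times> real \<Rightarrow> (nat \<Rightarrow> real \<times> real) \<Rightarrow> nat set \<Rightarrow> bool" where
  "is_UC C K u c S \<longleftrightarrow> S \<subseteq> {..<C} \<and> card S \<le> K \<and>
     (\<forall>T. T \<subseteq> {..<C} \<and> card T \<le> K \<longrightarrow> (\<Sum>j\<in>T. u \<bullet> c j) \<le> (\<Sum>j\<in>S. u \<bullet> c j))"

definition model :: "nat \<Rightarrow> nat \<Rightarrow> ((nat \<Rightarrow> real \<times> real) \<times> (nat \<Rightarrow> real \<times> real)) measure" where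
  "model C U = (PiM {..<U} (\<lambda>_. arc_unif)) \<Otimes>\<^sub>M (PiM {..<C} (\<lambda>_. arc_unif))"

text \<open>Event: under the t=0 user-centric recommendation, at least K creators stay,
  i.e. at least K creators are recommended to at least abar users.\<close>
definition at_least_K_stay :: "nat \<Rightarrow> nat \<Rightarrow> nat \<Rightarrow> nat \<Rightarrow>
    ((nat \<Rightarrow> real \<times> real) \<times> (nat \<Rightarrow> real \<times> real)) set" where
  "at_least_K_stay C K U abar =
     {(u, c) \<in> space (model C U). \<exists>rec. (\<forall>i<U. is_UC C K (u i) c (rec i)) \<and>
        K \<le> card {j\<in>{..<C}. abar \<le> card {i\<in>{..<U}. j \<in> rec i}}}"

definition ostat_space :: "nat \<Rightarrow> (nat \<Rightarrow> real) measure" where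
  "ostat_space C = PiM {..<C} (\<lambda>_. unif01)"

definition ordstat :: "nat \<Rightarrow> (nat \<Rightarrow> real) \<Rightarrow> nat \<Rightarrow> real" where
  "ordstat C x k = sort (map x [0..<C]) ! (k - 1)"

end

theory Submission
  imports Defs
begin

text \<open>Parametrise the quarter circle by \<open>t \<mapsto> (cos (\<pi> t / 2), sin (\<pi> t / 2))\<close>, \<open>t \<in> [0, 1]\<close>.
  Inner products become \<open>cos (\<pi> |t - s| / 2)\<close>, so the user-centric recommendation gives the
  user at \<open>t\<close> the \<open>K\<close> creators nearest to \<open>t\<close>, and the users served by a creator form an
  interval, its catchment. With the creators sorted as \<open>Y 0 < \<dots> < Y (C - 1)\<close> and \<open>C < 2 K\<close>,
  the catchment of \<open>Y m\<close> has length \<open>(Y m + Y (m + K)) / 2\<close>, \<open>1 - (Y (m - K) + Y m) / 2\<close>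
  or \<open>1\<close>. Given the creators, the number of the \<open>r C\<close> users served by a creator concentrates
  (Hoeffding) around \<open>r C\<close> times its catchment length, so the conditional probability that
  \<open>K\<close> creators reach \<open>r K\<close> users tends to \<open>1\<close> if at least \<open>K\<close> catchments are longer than
  \<open>K / C\<close> and to \<open>0\<close> otherwise. Counting shows that this happens exactly when the
  nondecreasing midpoints \<open>(Y i + Y (i + K)) / 2\<close> jump over \<open>[1 - K / C, K / C]\<close>, at the start,
  at the end or between two consecutive indices. Dominated convergence over the creators, whose
  sorted positions are uniform order statistics, gives the limit.\<close>

section \<open>Uniform distributions and the quarter circle\<close>

definition arc_point :: "real \<Rightarrow> real \<times> real" where
  "arc_point t = (cos (pi/2 * t), sin (pi/2 * t))"

lemma arc_point_measurable[measurable]: "arc_point \<in> borel_measurable borel"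
  unfolding arc_point_def by measurable

lemma prob_space_unif01: "prob_space unif01"
  unfolding unif01_def by (rule prob_space_uniform_measure) auto

lemma sets_unif01[simp, measurable_cong]: "sets unif01 = sets borel"
  unfolding unif01_def by simp

lemma space_unif01[simp]: "space unif01 = UNIV"
  unfolding unif01_def by simp

lemma emeasure_unif01: "A \<in> sets borel \<Longrightarrow> emeasure unif01 A = emeasure lborel (A \<inter> {0..1})"
  unfolding unif01_def by (subst emeasure_uniform_measure) (auto simp: Int_commute divide_ennreal_def)

lemma measure_unif01: "A \<in> sets borel \<Longrightarrow> measure unif01 A = measure lborel (A \<inter> {0..1})"
  unfolding measure_def by (simp add: emeasure_unif01)

lemma emeasure_unif01_singleton: "emeasure unif01 {p} = 0"
  by (simp add: emeasure_unif01 emeasure_lborel_countable)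

lemma distr_unif01_scale: "distr unif01 lborel (\<lambda>t. pi/2 * t) = uniform_measure lborel {0..pi/2}"
proof (rule uniform_distrI)
  show "emeasure lborel {0..pi/2} \<noteq> 0" using pi_gt_zero by simp
  fix B :: "real set" assume B: "B \<in> sets lborel"
  have scaled_01: "(\<lambda>t. pi/2 * t) -` B \<inter> {0..1} = (\<lambda>t. pi/2 * t) -` (B \<inter> {0..pi/2})"
  proof -
    have "0 \<le> pi/2 * t \<longleftrightarrow> 0 \<le> t" "pi/2 * t \<le> pi/2 \<longleftrightarrow> t \<le> 1" for t :: real
      using mult_le_cancel_left_pos[of "pi/2" 0 t] mult_le_cancel_left_pos[of "pi/2" t 1] pi_gt_zero
      by auto
    then show ?thesis by auto
  qed
  have "(\<lambda>t. pi/2 * t) -` B \<in> sets borel"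
    using B by (intro measurable_sets_borel[of _ borel]) auto
  then have "emeasure unif01 ((\<lambda>t. pi/2 * t) -` B \<inter> space unif01)
      = emeasure lborel ((\<lambda>t. pi/2 * t) -` B \<inter> {0..1})"
    by (simp add: emeasure_unif01)
  also have "\<dots> = emeasure lborel ((\<lambda>t. pi/2 * t) -` (B \<inter> {0..pi/2}))"
    by (simp only: scaled_01)
  also have "\<dots> = emeasure (distr lborel borel ((*) (pi/2))) (B \<inter> {0..pi/2})"
    using B by (subst emeasure_distr) auto
  also have "\<dots> = ennreal (2/pi) * emeasure lborel (B \<inter> {0..pi/2})"
    using B by (simp add: lborel_distr_mult emeasure_density_const)
  also have "\<dots> = emeasure lborel ({0..pi/2} \<inter> B) / emeasure lborel {0..pi/2}"
    using pi_gt_zero by (simp add: Int_commute divide_ennreal_def inverse_ennreal mult.commute)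
  finally show "emeasure unif01 ((\<lambda>t. pi/2 * t) -` B \<inter> space unif01)
      = emeasure lborel ({0..pi/2} \<inter> B) / emeasure lborel {0..pi/2}" .
qed auto

lemma arc_unif_eq_distr_unif01: "arc_unif = distr unif01 borel arc_point"
proof -
  have scale: "uniform_measure lborel {0..pi/2} = distr unif01 borel (\<lambda>t. pi/2 * t)"
    using distr_unif01_scale by (metis distr_cong sets_lborel)
  show ?thesis
    unfolding arc_unif_def scale by (subst distr_distr) (auto simp: comp_def arc_point_def[abs_def])
qed

lemma prob_space_arc_unif: "prob_space arc_unif"
  unfolding arc_unif_eq_distr_unif01
  by (rule prob_space.prob_space_distr[OF prob_space_unif01]) auto

lemma sets_arc_unif[simp, measurable_cong]: "sets arc_unif = sets borel"
  unfolding arc_unif_eq_distr_unif01 by simp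

lemma space_arc_unif[simp]: "space arc_unif = UNIV"
  unfolding arc_unif_eq_distr_unif01 by simp

lemma measure_arc_unif:
  "B \<in> sets borel \<Longrightarrow> measure arc_unif B = measure lborel (arc_point -` B \<inter> {0..1})"
  unfolding arc_unif_eq_distr_unif01
  by (subst measure_distr) (auto simp: measure_unif01 measurable_sets_borel[OF arc_point_measurable])

lemma arc_point_measurable_unif01: "arc_point \<in> measurable unif01 arc_unif"
  by (simp only: measurable_cong_sets[OF sets_unif01 sets_arc_unif]) (rule arc_point_measurable)

lemma measurable_component_PiM_UNIV:
  assumes "space M = UNIV"
  shows "(\<lambda>x. x j) \<in> measurable (PiM I (\<lambda>_. M)) M"
proof (cases "j \<in> I")
  case False
  then have "\<forall>u\<in>space (PiM I (\<lambda>_. M)). u j = undefined"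
    by (auto simp: space_PiM PiE_def extensional_def)
  then show ?thesis using assms by (subst measurable_cong[where g="\<lambda>_. undefined"]) auto
qed simp

lemma component_measurable_arc_unif[measurable]:
  "(\<lambda>x. x j) \<in> measurable (PiM I (\<lambda>_. arc_unif)) arc_unif"
  by (rule measurable_component_PiM_UNIV) simp

lemma component_measurable_unif01[measurable]:
  "(\<lambda>x. x j) \<in> measurable (PiM I (\<lambda>_. unif01)) unif01"
  by (rule measurable_component_PiM_UNIV) simp

lemma inner_arc_point: "arc_point t \<bullet> arc_point s = cos (pi/2 * \<bar>t - s\<bar>)"
proof -
  have "arc_point t \<bullet> arc_point s = cos (pi/2 * t - pi/2 * s)"
    by (simp add: arc_point_def cos_diff)
  also have "\<dots> = cos \<bar>pi/2 * (t - s)\<bar>"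
    by (simp add: right_diff_distrib)
  also have "\<bar>pi/2 * (t - s)\<bar> = pi/2 * \<bar>t - s\<bar>" by (simp add: abs_mult)
  finally show ?thesis .
qed

lemma cos_half_pi_abs_less_iff:
  assumes "\<bar>a\<bar> \<le> 1" "\<bar>b\<bar> \<le> 1"
  shows "cos (pi/2 * \<bar>a\<bar>) < cos (pi/2 * \<bar>b\<bar>) \<longleftrightarrow> \<bar>b\<bar> < \<bar>a\<bar>"
proof -
  have "pi/2 * \<bar>a\<bar> \<le> pi" "pi/2 * \<bar>b\<bar> \<le> pi"
    using assms pi_gt_zero by (auto intro: order.trans[OF mult_left_mono[of _ 1]])
  then show ?thesis using pi_gt_zero by (subst cos_mono_less_eq) auto
qed

lemma cos_half_pi_abs_pos:
  assumes "\<bar>a\<bar> < 1" shows "cos (pi/2 * \<bar>a\<bar>) > 0"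
proof (rule cos_gt_zero_pi)
  show "pi/2 * \<bar>a\<bar> < pi/2" using assms pi_gt_zero by simp
  have "0 \<le> pi/2 * \<bar>a\<bar>" using pi_gt_zero by simp
  then show "-(pi/2) < pi/2 * \<bar>a\<bar>" using pi_gt_zero by linarith
qed

section \<open>User-centric recommendations\<close>

lemma is_UC_exists: "\<exists>S. is_UC C K u c S"
proof -
  let ?F = "{T. T \<subseteq> {..<C} \<and> card T \<le> K}"
  let ?w = "\<lambda>T. \<Sum>j\<in>T. u \<bullet> c j"
  have fin: "finite ?F" by (rule finite_subset[of _ "Pow {..<C}"]) auto
  have "Max (?w ` ?F) \<in> ?w ` ?F" using fin by (intro Max_in) auto
  then obtain S where "S \<in> ?F" "?w S = Max (?w ` ?F)" by auto
  then show ?thesis using fin unfolding is_UC_def by (auto intro!: Max_ge)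
qed

lemma is_UC_cong:
  assumes "\<And>j. j < C \<Longrightarrow> c j = c' j"
  shows "is_UC C K u c S = is_UC C K u c' S"
proof -
  have "(\<Sum>j\<in>T. u \<bullet> c j) = (\<Sum>j\<in>T. u \<bullet> c' j)" if "T \<subseteq> {..<C}" for T
    using that assms by (intro sum.cong) auto
  then show ?thesis unfolding is_UC_def by (metis order_refl)
qed

lemma heaviest_subset_card_eq:
  fixes v :: "nat \<Rightarrow> real"
  assumes KC: "K < C" and pos: "\<And>k. k < C \<Longrightarrow> v k > 0"
    and S: "S \<subseteq> {..<C}" "card S \<le> K"
    and heaviest: "\<And>T. T \<subseteq> {..<C} \<Longrightarrow> card T \<le> K \<Longrightarrow> sum v T \<le> sum v S"
  shows "card S = K"
proof (rule ccontr)
  have finS: "finite S" using S finite_subset by blast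
  assume "card S \<noteq> K"
  with S KC have "card S < card {..<C}" by simp
  then have "\<not> {..<C} \<subseteq> S"
    using card_mono[OF finS] by (meson not_le)
  then obtain k where k: "k < C" "k \<notin> S" by auto
  have "sum v (insert k S) \<le> sum v S"
    using k S \<open>card S \<noteq> K\<close> finS by (intro heaviest) auto
  with k finS pos[OF k(1)] show False by simp
qed

lemma mem_heaviest_subset_iff:
  fixes v :: "nat \<Rightarrow> real"
  assumes KC: "K < C" and pos: "\<And>k. k < C \<Longrightarrow> v k > 0" and inj: "inj_on v {..<C}"
    and S: "S \<subseteq> {..<C}" "card S \<le> K"
    and heaviest: "\<And>T. T \<subseteq> {..<C} \<Longrightarrow> card T \<le> K \<Longrightarrow> sum v T \<le> sum v S"
  shows "j \<in> S \<longleftrightarrow> j < C \<and> card {l\<in>{..<C}. v l > v j} < K"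
proof -
  have finS: "finite S" using S finite_subset by blast
  have cardK: "card S = K" by (rule heaviest_subset_card_eq[OF KC pos S heaviest])
  have exchange: "v k < v l" if "k < C" "k \<notin> S" "l \<in> S" for k l
  proof (rule ccontr)
    assume "\<not> v k < v l"
    moreover have "v k \<noteq> v l"
    proof
      assume "v k = v l"
      with inj that S have "k = l" by (auto simp: inj_on_def)
      with that show False by simp
    qed
    ultimately have gt: "v k > v l" by linarith
    have "card S > 0" using that(3) finS by (auto simp: card_gt_0_iff)
    then have "card (insert k (S - {l})) = K"
      using that finS cardK by simp
    then have "sum v (insert k (S - {l})) \<le> sum v S"
      using that S by (intro heaviest) auto
    with that finS gt show False by (simp add: sum_diff1)
  qed
  show ?thesis
  proof
    assume jS: "j \<in> S"
    have "{l\<in>{..<C}. v l > v j} \<subseteq> S - {j}"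
    proof
      fix l assume l: "l \<in> {l\<in>{..<C}. v l > v j}"
      then have "l \<in> S" using exchange[of l j] jS by force
      then show "l \<in> S - {j}" using l by auto
    qed
    then have "card {l\<in>{..<C}. v l > v j} \<le> card (S - {j})"
      using finS by (intro card_mono) auto
    also have "\<dots> < K" using jS cardK finS by (metis card_Diff1_less)
    finally show "j < C \<and> card {l\<in>{..<C}. v l > v j} < K" using jS S by auto
  next
    assume j: "j < C \<and> card {l\<in>{..<C}. v l > v j} < K"
    show "j \<in> S"
    proof (rule ccontr)
      assume "j \<notin> S"
      then have "S \<subseteq> {l\<in>{..<C}. v l > v j}" using exchange j S by auto
      then have "card S \<le> card {l\<in>{..<C}. v l > v j}" by (intro card_mono) auto
      with j cardK show False by simp
    qed
  qed
qed

definition closer :: "nat \<Rightarrow> (nat \<Rightarrow> real) \<Rightarrow> real \<Rightarrow> real \<Rightarrow> nat set" where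
  "closer C x t v = {l\<in>{..<C}. \<bar>t - x l\<bar> < \<bar>t - v\<bar>}"

definition catchment :: "nat \<Rightarrow> nat \<Rightarrow> (nat \<Rightarrow> real) \<Rightarrow> real \<Rightarrow> real set" where
  "catchment C K x v = {t\<in>{0..1}. card (closer C x t v) < K}"

definition tie_free :: "nat \<Rightarrow> (nat \<Rightarrow> real) \<Rightarrow> real \<Rightarrow> bool" where
  "tie_free C x t \<longleftrightarrow> 0 < t \<and> t < 1 \<and> (\<forall>k<C. \<forall>l<C. k \<noteq> l \<longrightarrow> \<bar>t - x k\<bar> \<noteq> \<bar>t - x l\<bar>)"

lemma is_UC_arc_point_iff:
  assumes KC: "K < C" and x01: "\<And>k. k < C \<Longrightarrow> x k \<in> {0..1}"
    and t: "tie_free C x t" and j: "j < C"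
    and UC: "is_UC C K (arc_point t) (\<lambda>k. arc_point (x k)) S"
  shows "j \<in> S \<longleftrightarrow> card (closer C x t (x j)) < K"
proof -
  define v where "v k = cos (pi/2 * \<bar>t - x k\<bar>)" for k
  have dist1: "\<bar>t - x k\<bar> < 1" if "k < C" for k using x01[OF that] t by (auto simp: tie_free_def)
  have less_iff: "v k < v l \<longleftrightarrow> \<bar>t - x l\<bar> < \<bar>t - x k\<bar>" if "k < C" "l < C" for k l
    unfolding v_def using dist1[OF that(1)] dist1[OF that(2)] by (intro cos_half_pi_abs_less_iff) auto
  have "inj_on v {..<C}"
  proof (rule inj_onI, rule ccontr)
    fix k l assume kl: "k \<in> {..<C}" "l \<in> {..<C}" "v k = v l" "k \<noteq> l"
    then have "\<bar>t - x k\<bar> \<noteq> \<bar>t - x l\<bar>" using t by (auto simp: tie_free_def)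
    then show False using kl less_iff[of k l] less_iff[of l k] by auto
  qed
  moreover have "v k > 0" if "k < C" for k using cos_half_pi_abs_pos[OF dist1[OF that]] by (simp add: v_def)
  moreover have "S \<subseteq> {..<C}" "card S \<le> K"
    and "\<And>T. T \<subseteq> {..<C} \<Longrightarrow> card T \<le> K \<Longrightarrow> sum v T \<le> sum v S"
    using UC by (auto simp: is_UC_def v_def inner_arc_point)
  ultimately have "j \<in> S \<longleftrightarrow> j < C \<and> card {l\<in>{..<C}. v l > v j} < K"
    using KC by (intro mem_heaviest_subset_iff) auto
  also have "{l\<in>{..<C}. v l > v j} = closer C x t (x j)"
    using less_iff j by (auto simp: closer_def)
  finally show ?thesis using j by simp
qed

text \<open>Ties make the recommendation ambiguous for a null set of users, so the stay event is
  bracketed using both of the following sets.\<close>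

definition surely_recommended :: "nat \<Rightarrow> nat \<Rightarrow> (nat \<Rightarrow> real \<times> real) \<Rightarrow> nat \<Rightarrow> (real \<times> real) set" where
  "surely_recommended C K c j = {u. \<forall>S. is_UC C K u c S \<longrightarrow> j \<in> S}"

definition possibly_recommended :: "nat \<Rightarrow> nat \<Rightarrow> (nat \<Rightarrow> real \<times> real) \<Rightarrow> nat \<Rightarrow> (real \<times> real) set" where
  "possibly_recommended C K c j = {u. \<exists>S. is_UC C K u c S \<and> j \<in> S}"

lemma arc_point_recommended_iff:
  assumes "K < C" "\<And>k. k < C \<Longrightarrow> x k \<in> {0..1}" "tie_free C x t" "j < C"
  shows "arc_point t \<in> surely_recommended C K (\<lambda>k. arc_point (x k)) j \<longleftrightarrow> t \<in> catchment C K x (x j)"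
    and "arc_point t \<in> possibly_recommended C K (\<lambda>k. arc_point (x k)) j \<longleftrightarrow> t \<in> catchment C K x (x j)"
proof -
  obtain S0 where "is_UC C K (arc_point t) (\<lambda>k. arc_point (x k)) S0" using is_UC_exists by blast
  moreover have "t \<in> {0..1}" using assms(3) by (auto simp: tie_free_def)
  ultimately show "arc_point t \<in> surely_recommended C K (\<lambda>k. arc_point (x k)) j \<longleftrightarrow> t \<in> catchment C K x (x j)"
    and "arc_point t \<in> possibly_recommended C K (\<lambda>k. arc_point (x k)) j \<longleftrightarrow> t \<in> catchment C K x (x j)"
    using is_UC_arc_point_iff[OF assms] 
    unfolding surely_recommended_def possibly_recommended_def catchment_def by blast+
qed

lemma finite_not_tie_free:
  assumes inj: "inj_on x {..<C}"
  shows "finite {t\<in>{0..1}. \<not> tie_free C x t}"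
proof (rule finite_subset)
  show "{t\<in>{0..1}. \<not> tie_free C x t} \<subseteq> {0, 1} \<union> (\<lambda>(k, l). (x k + x l) / 2) ` ({..<C} \<times> {..<C})"
  proof
    fix t assume t: "t \<in> {t\<in>{0..1}. \<not> tie_free C x t}"
    show "t \<in> {0, 1} \<union> (\<lambda>(k, l). (x k + x l) / 2) ` ({..<C} \<times> {..<C})"
    proof (cases "t = 0 \<or> t = 1")
      case False
      with t obtain k l where kl: "k < C" "l < C" "k \<noteq> l" "\<bar>t - x k\<bar> = \<bar>t - x l\<bar>"
        by (auto simp: tie_free_def)
      moreover have "x k \<noteq> x l" using inj kl by (auto simp: inj_on_def)
      ultimately have "t = (x k + x l) / 2" by (auto simp: abs_if split: if_splits)
      then have "t \<in> (\<lambda>(k, l). (x k + x l) / 2) ` ({..<C} \<times> {..<C})"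
        using kl by (intro image_eqI[where x="(k, l)"]) auto
      then show ?thesis by blast
    qed auto
  qed
qed auto

lemma surely_recommended_borel: "surely_recommended C K c j \<in> sets borel"
proof -
  have "surely_recommended C K c j =
      {u\<in>space borel. \<forall>S\<in>Pow {..<C}. (card S \<le> K \<and> (\<forall>T\<in>Pow {..<C}. card T \<le> K \<longrightarrow>
         (\<Sum>j\<in>T. u \<bullet> c j) \<le> (\<Sum>j\<in>S. u \<bullet> c j))) \<longrightarrow> j \<in> S}"
    unfolding surely_recommended_def is_UC_def by auto
  also have "\<dots> \<in> sets borel" by measurable
  finally show ?thesis .
qed

lemma possibly_recommended_borel: "possibly_recommended C K c j \<in> sets borel"
proof -
  have "possibly_recommended C K c j =
      {u\<in>space borel. \<exists>S\<in>Pow {..<C}. (card S \<le> K \<and> (\<forall>T\<in>Pow {..<C}. card T \<le> K \<longrightarrow>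
         (\<Sum>j\<in>T. u \<bullet> c j) \<le> (\<Sum>j\<in>S. u \<bullet> c j))) \<and> j \<in> S}"
    unfolding possibly_recommended_def is_UC_def by auto
  also have "\<dots> \<in> sets borel" by measurable
  finally show ?thesis .
qed

lemma real_card_eq_sum_indicator:
  assumes "finite I"
  shows "real (card {l\<in>I. P l}) = (\<Sum>l\<in>I. if P l then 1 else 0)"
proof -
  have "(\<Sum>l\<in>I. if P l then 1 else 0 :: real) = (\<Sum>l\<in>{l\<in>I. P l}. 1)"
    using assms by (intro sum.mono_neutral_cong_right) auto
  then show ?thesis by simp
qed

lemma catchment_borel: "catchment C K x v \<in> sets borel"
proof -
  have "catchment C K x v = {t\<in>space borel. t \<in> {0..1} \<and>
      (\<Sum>l\<in>{..<C}. if \<bar>t - x l\<bar> < \<bar>t - v\<bar> then 1 else 0 :: real) < real K}"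
    unfolding catchment_def closer_def by (auto simp: real_card_eq_sum_indicator[symmetric])
  also have "\<dots> \<in> sets borel" by measurable
  finally show ?thesis .
qed

lemma measure_lborel_eq_if_finite_symdiff:
  assumes "A \<in> sets borel" "B \<in> sets borel" "finite F" "\<And>t. t \<notin> F \<Longrightarrow> t \<in> A \<longleftrightarrow> t \<in> B"
  shows "measure lborel A = measure lborel B"
proof (rule measure_eq_AE)
  have "AE t in lborel. t \<notin> F" by (rule AE_not_in[OF finite_imp_null_set_lborel[OF assms(3)]])
  then show "AE t in lborel. t \<in> A \<longleftrightarrow> t \<in> B" by eventually_elim (use assms(4) in auto)
qed (use assms in auto)

lemma measure_recommended_eq_catchment:
  assumes KC: "K < C" and x01: "\<And>k. k < C \<Longrightarrow> x k \<in> {0..1}" and inj: "inj_on x {..<C}"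
    and j: "j < C"
  shows "measure arc_unif (surely_recommended C K (\<lambda>k. arc_point (x k)) j) = measure lborel (catchment C K x (x j))"
    and "measure arc_unif (possibly_recommended C K (\<lambda>k. arc_point (x k)) j) = measure lborel (catchment C K x (x j))"
proof -
  have via_catchment: "measure arc_unif R = measure lborel (catchment C K x (x j))"
    if R: "R \<in> sets borel"
      and agree: "\<And>t. tie_free C x t \<Longrightarrow> arc_point t \<in> R \<longleftrightarrow> t \<in> catchment C K x (x j)" for R
  proof -
    have "arc_point -` R \<inter> {0..1} \<in> sets borel"
      using measurable_sets_borel[OF arc_point_measurable R] by auto
    then have "measure lborel (arc_point -` R \<inter> {0..1}) = measure lborel (catchment C K x (x j))"
    proof (rule measure_lborel_eq_if_finite_symdiff[OF _ catchment_borel finite_not_tie_free[OF inj]])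
      fix t assume "t \<notin> {t\<in>{0..1}. \<not> tie_free C x t}"
      then show "t \<in> arc_point -` R \<inter> {0..1} \<longleftrightarrow> t \<in> catchment C K x (x j)"
        using agree[of t] by (cases "t \<in> {0..1}") (auto simp: catchment_def)
    qed
    with R show ?thesis by (simp add: measure_arc_unif)
  qed
  show "measure arc_unif (surely_recommended C K (\<lambda>k. arc_point (x k)) j) = measure lborel (catchment C K x (x j))"
    by (rule via_catchment[OF surely_recommended_borel], rule arc_point_recommended_iff(1)[OF KC x01 _ j])
  show "measure arc_unif (possibly_recommended C K (\<lambda>k. arc_point (x k)) j) = measure lborel (catchment C K x (x j))"
    by (rule via_catchment[OF possibly_recommended_borel], rule arc_point_recommended_iff(2)[OF KC x01 _ j])
qed

section \<open>Catchments of sorted positions\<close>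

definition span_midpoint :: "(nat \<Rightarrow> real) \<Rightarrow> nat \<Rightarrow> nat \<Rightarrow> real" where
  "span_midpoint Y K i = (Y i + Y (i + K)) / 2"

locale increasing_positions =
  fixes C :: nat and Y :: "nat \<Rightarrow> real"
  assumes less: "\<And>i j. i < j \<Longrightarrow> j < C \<Longrightarrow> Y i < Y j"
begin

lemma le: "i \<le> j \<Longrightarrow> j < C \<Longrightarrow> Y i \<le> Y j"
  using less[of i j] by (cases "i = j") auto

lemma inj_on_Y: "inj_on Y {..<C}"
  unfolding inj_on_def by (metis lessThan_iff linorder_neqE_nat less order_less_irrefl)

lemma closer_right_eq:
  assumes m: "m < C" and t: "Y m \<le> t"
  shows "closer C Y t (Y m) = {l. m < l \<and> l < C \<and> Y l < 2*t - Y m}"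
proof (intro set_eqI iffI)
  fix l assume "l \<in> closer C Y t (Y m)"
  then have l: "l < C" "\<bar>t - Y l\<bar> < \<bar>t - Y m\<bar>" by (auto simp: closer_def)
  have "m < l"
  proof (rule ccontr)
    assume "\<not> m < l"
    then have "Y l \<le> Y m" using le[of l m] m by simp
    with l t show False by auto
  qed
  with l t less[of m l] show "l \<in> {l. m < l \<and> l < C \<and> Y l < 2*t - Y m}" by auto
next
  fix l assume "l \<in> {l. m < l \<and> l < C \<and> Y l < 2*t - Y m}"
  with t less[of m l] show "l \<in> closer C Y t (Y m)" by (auto simp: closer_def)
qed

lemma closer_left_eq:
  assumes m: "m < C" and t: "t \<le> Y m"
  shows "closer C Y t (Y m) = {l. l < m \<and> Y l > 2*t - Y m}"
proof (intro set_eqI iffI)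
  fix l assume "l \<in> closer C Y t (Y m)"
  then have l: "l < C" "\<bar>t - Y l\<bar> < \<bar>t - Y m\<bar>" by (auto simp: closer_def)
  have "l < m"
  proof (rule ccontr)
    assume "\<not> l < m"
    then have "Y m \<le> Y l" using le[of m l] l by simp
    with l t show False by auto
  qed
  with l t less[of l m] m show "l \<in> {l. l < m \<and> Y l > 2*t - Y m}" by auto
next
  fix l assume "l \<in> {l. l < m \<and> Y l > 2*t - Y m}"
  with t m less[of l m] show "l \<in> closer C Y t (Y m)" by (auto simp: closer_def)
qed

lemma card_closer_left:
  assumes "m < C" "t \<le> Y m"
  shows "card (closer C Y t (Y m)) \<le> m"
proof -
  have "closer C Y t (Y m) \<subseteq> {..<m}" unfolding closer_left_eq[OF assms] by auto
  then have "card (closer C Y t (Y m)) \<le> card {..<m}" by (intro card_mono) auto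
  then show ?thesis by simp
qed

lemma card_closer_right:
  assumes "m < C" "Y m \<le> t"
  shows "card (closer C Y t (Y m)) \<le> C - 1 - m"
proof -
  have "closer C Y t (Y m) \<subseteq> {m<..<C}" unfolding closer_right_eq[OF assms] by auto
  then have "card (closer C Y t (Y m)) \<le> card {m<..<C}" by (intro card_mono) auto
  then show ?thesis by simp
qed

end

text \<open>Only creators on the user's side of \<open>Y m\<close> can be closer to the user, at most \<open>m\<close> on
  the left and \<open>C - 1 - m\<close> on the right. As \<open>C < 2 K\<close>, one of these bounds is below \<open>K\<close>,
  so each catchment is an initial segment, a final segment, or all of \<open>[0, 1]\<close>.\<close>

locale catchment_setting = increasing_positions +
  fixes K :: nat
  assumes K_less: "K < C" and less_double_K: "C < 2 * K"
    and range_01: "\<And>m. m < C \<Longrightarrow> Y m \<in> {0..1}"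
begin

lemma catchment_left:
  assumes m: "m + K < C"
  shows "catchment C K Y (Y m) = {t\<in>{0..1}. t \<le> span_midpoint Y K m}"
proof -
  have mK: "m < K" and mC: "m < C" and YmK: "Y m < Y (m + K)"
    using m less_double_K less[of m "m + K"] by auto
  have "card (closer C Y t (Y m)) < K \<longleftrightarrow> t \<le> span_midpoint Y K m" for t
  proof (cases "t < Y m")
    case True
    then show ?thesis using card_closer_left[OF mC, of t] mK YmK by (simp add: span_midpoint_def)
  next
    case False
    then have cl: "closer C Y t (Y m) = {l. m < l \<and> l < C \<and> Y l < 2*t - Y m}"
      using closer_right_eq[OF mC] by simp
    show ?thesis
    proof (cases "t \<le> span_midpoint Y K m")
      case True
      have "closer C Y t (Y m) \<subseteq> {m<..<m + K}"
      proof
        fix l assume "l \<in> closer C Y t (Y m)"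
        then have l: "m < l" "l < C" "Y l < 2*t - Y m" using cl by auto
        have "l < m + K"
        proof (rule ccontr)
          assume "\<not> l < m + K"
          then have "Y (m + K) \<le> Y l" using le[of "m + K" l] l by simp
          with l True show False by (simp add: span_midpoint_def)
        qed
        with l show "l \<in> {m<..<m + K}" by simp
      qed
      then have "card (closer C Y t (Y m)) \<le> card {m<..<m + K}" by (intro card_mono) auto
      also have "\<dots> < K" using mK by simp
      finally show ?thesis using True by simp
    next
      case False
      have "{m<..m + K} \<subseteq> closer C Y t (Y m)"
      proof
        fix l assume l: "l \<in> {m<..m + K}"
        then have "Y l \<le> Y (m + K)" using le[of l "m + K"] m by simp
        then show "l \<in> closer C Y t (Y m)" using cl l m False by (auto simp: span_midpoint_def)
      qed
      then have "card {m<..m + K} \<le> card (closer C Y t (Y m))"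
        by (intro card_mono) (auto simp: closer_def)
      then show ?thesis using False by simp
    qed
  qed
  then show ?thesis by (auto simp: catchment_def)
qed

lemma catchment_right:
  assumes m: "K \<le> m" "m < C"
  shows "catchment C K Y (Y m) = {t\<in>{0..1}. span_midpoint Y K (m - K) \<le> t}"
proof -
  have mK: "C - 1 - m < K" and YmK: "Y (m - K) < Y m"
    using m less_double_K less[of "m - K" m] by auto
  have mid: "span_midpoint Y K (m - K) = (Y (m - K) + Y m) / 2"
    using m by (simp add: span_midpoint_def)
  have "card (closer C Y t (Y m)) < K \<longleftrightarrow> span_midpoint Y K (m - K) \<le> t" for t
  proof (cases "Y m < t")
    case True
    then show ?thesis using card_closer_right[OF m(2), of t] mK YmK mid by simp
  next
    case False
    then have cl: "closer C Y t (Y m) = {l. l < m \<and> Y l > 2*t - Y m}"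
      using closer_left_eq[OF m(2)] by simp
    show ?thesis
    proof (cases "span_midpoint Y K (m - K) \<le> t")
      case True
      have "closer C Y t (Y m) \<subseteq> {m - K<..<m}"
      proof
        fix l assume "l \<in> closer C Y t (Y m)"
        then have l: "l < m" "Y l > 2*t - Y m" using cl by auto
        have "m - K < l"
        proof (rule ccontr)
          assume "\<not> m - K < l"
          then have "Y l \<le> Y (m - K)" using le[of l "m - K"] m by simp
          with l True mid show False by simp
        qed
        with l show "l \<in> {m - K<..<m}" by simp
      qed
      then have "card (closer C Y t (Y m)) \<le> card {m - K<..<m}" by (intro card_mono) auto
      also have "\<dots> < K" using m less_double_K by simp
      finally show ?thesis using True by simp
    next
      case False
      have "{m - K..<m} \<subseteq> closer C Y t (Y m)"
      proof
        fix l assume l: "l \<in> {m - K..<m}"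
        then have "Y (m - K) \<le> Y l" using le[of "m - K" l] m by simp
        then show "l \<in> closer C Y t (Y m)" using cl l m False mid by auto
      qed
      then have "card {m - K..<m} \<le> card (closer C Y t (Y m))"
        by (intro card_mono) (auto simp: closer_def)
      then show ?thesis using False m by simp
    qed
  qed
  then show ?thesis by (auto simp: catchment_def)
qed

lemma catchment_middle:
  assumes m: "m < K" "C \<le> m + K"
  shows "catchment C K Y (Y m) = {0..1}"
proof -
  have mC: "m < C" using m K_less by simp
  have "card (closer C Y t (Y m)) < K" for t
  proof (cases "t \<le> Y m")
    case True
    then show ?thesis using card_closer_left[OF mC, of t] m by simp
  next
    case False
    then show ?thesis using card_closer_right[OF mC, of t] m K_less by simp
  qed
  then show ?thesis by (auto simp: catchment_def)
qed

lemma span_midpoint_01: "i + K < C \<Longrightarrow> span_midpoint Y K i \<in> {0..1}"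
  using range_01[of i] range_01[of "i + K"] by (auto simp: span_midpoint_def)

lemma measure_catchment_left:
  assumes "m + K < C"
  shows "measure lborel (catchment C K Y (Y m)) = span_midpoint Y K m"
proof -
  have "catchment C K Y (Y m) = {0..span_midpoint Y K m}"
    using assms span_midpoint_01[of m] by (auto simp: catchment_left)
  then show ?thesis using assms span_midpoint_01[of m] by simp
qed

lemma measure_catchment_right:
  assumes "K \<le> m" "m < C"
  shows "measure lborel (catchment C K Y (Y m)) = 1 - span_midpoint Y K (m - K)"
proof -
  have "catchment C K Y (Y m) = {span_midpoint Y K (m - K)..1}"
    using assms span_midpoint_01[of "m - K"] by (auto simp: catchment_right)
  then show ?thesis using assms span_midpoint_01[of "m - K"] by simp
qed

lemma measure_catchment_middle:
  "m < K \<Longrightarrow> C \<le> m + K \<Longrightarrow> measure lborel (catchment C K Y (Y m)) = 1"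
  by (simp add: catchment_middle)

lemma measure_catchment_neq:
  assumes m: "m < C" and "\<kappa> < 1"
    and avoid: "\<And>i. i + K < C \<Longrightarrow> span_midpoint Y K i \<noteq> \<kappa> \<and> span_midpoint Y K i \<noteq> 1 - \<kappa>"
  shows "measure lborel (catchment C K Y (Y m)) \<noteq> \<kappa>"
proof -
  consider "m + K < C" | "K \<le> m" | "m < K" "C \<le> m + K" by linarith
  then show ?thesis
  proof cases
    case 1
    then show ?thesis using avoid[of m] measure_catchment_left[of m] by simp
  next
    case 2
    then show ?thesis using avoid[of "m - K"] measure_catchment_right[of m] m by simp
  next
    case 3
    then show ?thesis using measure_catchment_middle[of m] \<open>\<kappa> < 1\<close> by simp
  qed
qed

lemma long_catchments_eq:
  assumes "\<kappa> < 1"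
  shows "{m\<in>{..<C}. measure lborel (catchment C K Y (Y m)) > \<kappa>}
    = {i\<in>{..<C - K}. span_midpoint Y K i > \<kappa>} \<union> {C - K..<K}
      \<union> (\<lambda>i. i + K) ` {i\<in>{..<C - K}. span_midpoint Y K i < 1 - \<kappa>}"
    (is "?L = ?S1 \<union> ?M \<union> (\<lambda>i. i + K) ` ?S3")
proof (intro set_eqI iffI)
  fix m assume m: "m \<in> ?L"
  consider "m + K < C" | "K \<le> m" | "m < K" "C \<le> m + K" by linarith
  then show "m \<in> ?S1 \<union> ?M \<union> (\<lambda>i. i + K) ` ?S3"
  proof cases
    case 1
    then show ?thesis using m measure_catchment_left[of m] by auto
  next
    case 2
    then have "m - K \<in> ?S3" using m measure_catchment_right[of m] by auto
    moreover have "m = m - K + K" using 2 by simp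
    ultimately show ?thesis by blast
  qed auto
next
  fix m assume "m \<in> ?S1 \<union> ?M \<union> (\<lambda>i. i + K) ` ?S3"
  then consider "m \<in> ?S1" | "m \<in> ?M" | i where "i \<in> ?S3" "m = i + K" by blast
  then show "m \<in> ?L"
  proof cases
    case 1
    then show ?thesis using measure_catchment_left[of m] by auto
  next
    case 2
    then show ?thesis using measure_catchment_middle[of m] assms K_less by auto
  next
    case 3
    then show ?thesis using measure_catchment_right[of m] by auto
  qed
qed

text \<open>With \<open>1 - \<kappa> < \<kappa>\<close>, the \<open>2 K - C\<close> middle catchments are always long and each
  index \<open>i < C - K\<close> contributes at most one long catchment (the \<open>i\<close>-th or the
  \<open>(i + K)\<close>-th), so \<open>K\<close> long catchments require every midpoint to avoid \<open>[1 - \<kappa>, \<kappa>]\<close>.\<close>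

lemma card_long_catchments_iff:
  assumes \<kappa>: "1 - \<kappa> < \<kappa>" "\<kappa> < 1"
  shows "K \<le> card {m\<in>{..<C}. measure lborel (catchment C K Y (Y m)) > \<kappa>} \<longleftrightarrow>
         (\<forall>i<C - K. span_midpoint Y K i > \<kappa> \<or> span_midpoint Y K i < 1 - \<kappa>)"
proof -
  define S1 where "S1 = {i\<in>{..<C - K}. span_midpoint Y K i > \<kappa>}"
  define S3 where "S3 = {i\<in>{..<C - K}. span_midpoint Y K i < 1 - \<kappa>}"
  have disj: "S1 \<inter> {C - K..<K} = {}" "(S1 \<union> {C - K..<K}) \<inter> (\<lambda>i. i + K) ` S3 = {}" "S1 \<inter> S3 = {}"
    using \<kappa> less_double_K by (auto simp: S1_def S3_def)
  have "card {m\<in>{..<C}. measure lborel (catchment C K Y (Y m)) > \<kappa>}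
      = card (S1 \<union> {C - K..<K}) + card ((\<lambda>i. i + K) ` S3)"
    unfolding long_catchments_eq[OF \<kappa>(2)] S1_def[symmetric] S3_def[symmetric]
    using disj by (intro card_Un_disjoint) (auto simp: S1_def S3_def)
  also have "\<dots> = card S1 + (K - (C - K)) + card S3"
    using disj by (subst card_Un_disjoint) (auto simp: S1_def card_image inj_on_def)
  moreover have "card S1 + card S3 = card (S1 \<union> S3)"
    using disj by (intro card_Un_disjoint[symmetric]) (auto simp: S1_def S3_def)
  ultimately have "K \<le> card {m\<in>{..<C}. measure lborel (catchment C K Y (Y m)) > \<kappa>}
      \<longleftrightarrow> C - K \<le> card (S1 \<union> S3)"
    using less_double_K by linarith
  also have "\<dots> \<longleftrightarrow> S1 \<union> S3 = {..<C - K}"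
  proof
    have "S1 \<union> S3 \<subseteq> {..<C - K}" by (auto simp: S1_def S3_def)
    then show "C - K \<le> card (S1 \<union> S3) \<Longrightarrow> S1 \<union> S3 = {..<C - K}"
      by (intro card_seteq) auto
  qed simp
  also have "\<dots> \<longleftrightarrow> (\<forall>i<C - K. span_midpoint Y K i > \<kappa> \<or> span_midpoint Y K i < 1 - \<kappa>)"
    by (auto simp: S1_def S3_def)
  finally show ?thesis .
qed

end

section \<open>Order statistics and the limit event\<close>

definition sorted_pos :: "nat \<Rightarrow> (nat \<Rightarrow> real) \<Rightarrow> nat \<Rightarrow> real" where
  "sorted_pos C x i = sort (map x [0..<C]) ! i"

lemma ordstat_eq_sorted_pos: "ordstat C x k = sorted_pos C x (k - 1)"
  by (simp add: ordstat_def sorted_pos_def)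

lemma sorted_pos_mono: "i \<le> j \<Longrightarrow> j < C \<Longrightarrow> sorted_pos C x i \<le> sorted_pos C x j"
  unfolding sorted_pos_def by (rule sorted_nth_mono) auto

lemma sorted_pos_image: "sorted_pos C x ` {..<C} = x ` {..<C}"
proof -
  have "sorted_pos C x ` {..<C} = set (sort (map x [0..<C]))"
    unfolding sorted_pos_def by (auto simp: set_conv_nth)
  then show ?thesis by (auto simp: lessThan_atLeast0)
qed

lemma increasing_positions_sorted_pos:
  assumes "inj_on x {..<C}" shows "increasing_positions C (sorted_pos C x)"
proof
  fix i j assume ij: "i < j" "j < C"
  have "distinct (map x [0..<C])" using assms by (simp add: distinct_map lessThan_atLeast0)
  then have "sorted_wrt (<) (sort (map x [0..<C]))" by (simp add: strict_sorted_iff)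
  from sorted_wrt_nth_less[OF this ij(1)] ij show "sorted_pos C x i < sorted_pos C x j"
    by (simp add: sorted_pos_def)
qed

lemma card_Collect_inj_on_image_eq:
  assumes "inj_on f A" "inj_on g B" "f ` A = g ` B"
  shows "card {a\<in>A. P (f a)} = card {b\<in>B. P (g b)}"
proof -
  have "card {a\<in>A. P (f a)} = card (f ` {a\<in>A. P (f a)})"
    using assms(1) by (intro card_image[symmetric]) (auto intro: inj_on_subset)
  also have "f ` {a\<in>A. P (f a)} = {v\<in>f ` A. P v}" by auto
  also have "\<dots> = g ` {b\<in>B. P (g b)}" using assms(3) by auto
  also have "card \<dots> = card {b\<in>B. P (g b)}"
    using assms(2) by (intro card_image) (auto intro: inj_on_subset)
  finally show ?thesis .
qed

lemma catchment_sorted_pos: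
  assumes inj: "inj_on x {..<C}"
  shows "catchment C K (sorted_pos C x) v = catchment C K x v"
proof -
  interpret increasing_positions C "sorted_pos C x" by (rule increasing_positions_sorted_pos[OF inj])
  have "card (closer C (sorted_pos C x) t v) = card (closer C x t v)" for t
    unfolding closer_def using inj_on_Y inj sorted_pos_image[of C x]
    by (intro card_Collect_inj_on_image_eq[where P="\<lambda>w. \<bar>t - w\<bar> < \<bar>t - v\<bar>"])
  then show ?thesis by (simp add: catchment_def)
qed

lemma sorted_nth_le_iff:
  assumes "sorted xs" "i < length xs"
  shows "xs ! i \<le> t \<longleftrightarrow> Suc i \<le> card {m. m < length xs \<and> xs ! m \<le> t}"
proof
  assume "xs ! i \<le> t"
  then have "{..i} \<subseteq> {m. m < length xs \<and> xs ! m \<le> t}"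
    using assms by (auto intro: order.trans[OF sorted_nth_mono[OF assms(1)]])
  then have "card {..i} \<le> card {m. m < length xs \<and> xs ! m \<le> t}" by (intro card_mono) auto
  then show "Suc i \<le> card {m. m < length xs \<and> xs ! m \<le> t}" by simp
next
  assume at_least: "Suc i \<le> card {m. m < length xs \<and> xs ! m \<le> t}"
  show "xs ! i \<le> t"
  proof (rule ccontr)
    assume "\<not> xs ! i \<le> t"
    then have "{m. m < length xs \<and> xs ! m \<le> t} \<subseteq> {..<i}"
      using sorted_nth_mono[OF assms(1), of i] by (force simp: not_le)
    then have "card {m. m < length xs \<and> xs ! m \<le> t} \<le> card {..<i}" by (intro card_mono) auto
    with at_least show False by simp
  qed
qed

lemma sorted_pos_le_iff:
  assumes "i < C"
  shows "sorted_pos C x i \<le> t \<longleftrightarrow> Suc i \<le> card {j\<in>{..<C}. x j \<le> t}"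
proof -
  let ?xs = "sort (map x [0..<C])"
  have "sorted_pos C x i \<le> t \<longleftrightarrow> Suc i \<le> card {m. m < length ?xs \<and> ?xs ! m \<le> t}"
    unfolding sorted_pos_def using assms by (intro sorted_nth_le_iff) auto
  also have "card {m. m < length ?xs \<and> ?xs ! m \<le> t} = length (filter (\<lambda>v. v \<le> t) ?xs)"
    by (simp add: length_filter_conv_card)
  also have "\<dots> = length (filter (\<lambda>v. v \<le> t) (map x [0..<C]))"
    by (simp add: filter_sort)
  also have "\<dots> = card {j\<in>{..<C}. x j \<le> t}"
    by (simp add: length_filter_conv_card) (intro arg_cong[where f=card] Collect_cong, auto)
  finally show ?thesis .
qed

lemma nth_beyond_length: "length xs \<le> i \<Longrightarrow> xs ! i = [] ! (i - length xs)"
  by (induction xs arbitrary: i) (auto simp: nth_Cons split: nat.split)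

lemma sorted_pos_measurable[measurable]:
  "(\<lambda>x. sorted_pos C x i) \<in> borel_measurable (ostat_space C)"
proof (cases "i < C")
  case True
  show ?thesis
  proof (subst borel_measurable_iff_le, intro allI)
    fix t
    have "{x\<in>space (ostat_space C). sorted_pos C x i \<le> t}
        = {x\<in>space (ostat_space C). Suc i \<le> card {j\<in>{..<C}. x j \<le> t}}"
      using True by (simp add: sorted_pos_le_iff)
    also have "\<dots> = {x\<in>space (ostat_space C).
        real (Suc i) \<le> (\<Sum>j\<in>{..<C}. if x j \<le> t then 1 else 0)}"
      by (simp only: real_card_eq_sum_indicator[OF finite_lessThan, symmetric] of_nat_le_iff)
    also have "\<dots> \<in> sets (ostat_space C)" unfolding ostat_space_def by measurable
    finally show "{x\<in>space (ostat_space C). sorted_pos C x i \<le> t} \<in> sets (ostat_space C)" .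
  qed
next
  case False
  have "sorted_pos C x i = [] ! (i - C)" for x
    using False nth_beyond_length[of "sort (map x [0..<C])" i] by (simp add: sorted_pos_def)
  then show ?thesis by simp
qed

lemma ordstat_measurable[measurable]: "(\<lambda>x. ordstat C x k) \<in> borel_measurable (ostat_space C)"
  unfolding ordstat_eq_sorted_pos by measurable

text \<open>A monotone sequence that avoids \<open>[1 - \<kappa>, \<kappa>]\<close> lies entirely above it, entirely below
  it, or jumps over it at a unique index; genericity makes the weak and strict versions of the
  inequalities agree.\<close>

lemma mono_avoids_interval_iff:
  fixes a :: "nat \<Rightarrow> real"
  assumes n: "1 \<le> n" and mono: "\<And>i j. i \<le> j \<Longrightarrow> j < n \<Longrightarrow> a i \<le> a j"
    and generic: "\<And>i. i < n \<Longrightarrow> a i \<noteq> \<kappa> \<and> a i \<noteq> 1 - \<kappa>"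
  shows "(\<forall>i<n. a i > \<kappa> \<or> a i < 1 - \<kappa>) \<longleftrightarrow>
         a 0 \<ge> \<kappa> \<or> a (n - 1) \<le> 1 - \<kappa> \<or> (\<exists>i\<in>{2..n}. a (i - 1) \<ge> \<kappa> \<and> a (i - 2) \<le> 1 - \<kappa>)"
proof
  assume avoid: "\<forall>i<n. a i > \<kappa> \<or> a i < 1 - \<kappa>"
  show "a 0 \<ge> \<kappa> \<or> a (n - 1) \<le> 1 - \<kappa> \<or> (\<exists>i\<in>{2..n}. a (i - 1) \<ge> \<kappa> \<and> a (i - 2) \<le> 1 - \<kappa>)"
  proof (cases "\<exists>i<n. a i > \<kappa>")
    case False
    then have "a (n - 1) < 1 - \<kappa>" using avoid n by (metis diff_less zero_less_one less_le_trans)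
    then show ?thesis by simp
  next
    case True
    define i0 where "i0 = (LEAST i. i < n \<and> a i > \<kappa>)"
    have i0: "i0 < n" "a i0 > \<kappa>" using LeastI_ex[OF True] unfolding i0_def by auto
    show ?thesis
    proof (cases i0)
      case 0
      then show ?thesis using i0 by simp
    next
      case (Suc k)
      then have "\<not> a k > \<kappa>" using not_less_Least[of k "\<lambda>i. i < n \<and> a i > \<kappa>"] i0 unfolding i0_def by auto
      moreover have "k < n" using i0 Suc by simp
      ultimately have "a k < 1 - \<kappa>" using avoid by auto
      then have "i0 + 1 \<in> {2..n} \<and> a (i0 + 1 - 1) \<ge> \<kappa> \<and> a (i0 + 1 - 2) \<le> 1 - \<kappa>"
        using i0 Suc by auto
      then show ?thesis by blast
    qed
  qed
next
  assume "a 0 \<ge> \<kappa> \<or> a (n - 1) \<le> 1 - \<kappa> \<or> (\<exists>i\<in>{2..n}. a (i - 1) \<ge> \<kappa> \<and> a (i - 2) \<le> 1 - \<kappa>)"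
  then have "a i \<ge> \<kappa> \<or> a i \<le> 1 - \<kappa>" if i: "i < n" for i
  proof (elim disjE bexE conjE)
    assume "a 0 \<ge> \<kappa>"
    then show ?thesis using mono[of 0 i] i by auto
  next
    assume "a (n - 1) \<le> 1 - \<kappa>"
    moreover have "a i \<le> a (n - 1)" using i by (intro mono) auto
    ultimately show ?thesis by auto
  next
    fix k assume k: "k \<in> {2..n}" "a (k - 1) \<ge> \<kappa>" "a (k - 2) \<le> 1 - \<kappa>"
    show ?thesis
    proof (cases "k - 1 \<le> i")
      case True
      then show ?thesis using mono[of "k - 1" i] i k by auto
    next
      case False
      then have "i \<le> k - 2" "k - 2 < n" using k i by auto
      then show ?thesis using mono[of i "k - 2"] k by auto
    qed
  qed
  then show "\<forall>i<n. a i > \<kappa> \<or> a i < 1 - \<kappa>" using generic by force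
qed

definition limit_event :: "nat \<Rightarrow> nat \<Rightarrow> (nat \<Rightarrow> real) \<Rightarrow> bool" where
  "limit_event C K x \<longleftrightarrow>
     (ordstat C x 1 + ordstat C x (K + 1)) / 2 \<ge> real K / real C \<or>
     (ordstat C x (C - K) + ordstat C x C) / 2 \<le> 1 - real K / real C \<or>
     (\<exists>i\<in>{2..C - K}. (ordstat C x i + ordstat C x (K + i)) / 2 \<ge> real K / real C \<and>
             (ordstat C x (i - 1) + ordstat C x (K + i - 1)) / 2 \<le> 1 - real K / real C)"

lemma ordstat_span_midpoint:
  assumes "K < C"
  shows "(ordstat C x 1 + ordstat C x (K + 1)) / 2 = span_midpoint (sorted_pos C x) K 0"
    and "(ordstat C x (C - K) + ordstat C x C) / 2 = span_midpoint (sorted_pos C x) K (C - K - 1)"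
    and "i \<in> {2..C - K} \<Longrightarrow> (ordstat C x i + ordstat C x (K + i)) / 2 = span_midpoint (sorted_pos C x) K (i - 1)"
    and "i \<in> {2..C - K} \<Longrightarrow>
      (ordstat C x (i - 1) + ordstat C x (K + i - 1)) / 2 = span_midpoint (sorted_pos C x) K (i - 2)"
proof -
  have "C - K - 1 + K = C - 1" using assms by simp
  then show "(ordstat C x 1 + ordstat C x (K + 1)) / 2 = span_midpoint (sorted_pos C x) K 0"
    and "(ordstat C x (C - K) + ordstat C x C) / 2 = span_midpoint (sorted_pos C x) K (C - K - 1)"
    by (simp_all add: ordstat_eq_sorted_pos span_midpoint_def)
next
  assume "i \<in> {2..C - K}"
  then have "K + i - 1 = K + (i - 1)" "K + i - 1 - 1 = i - 2 + K" "i - 1 - 1 = i - 2" by auto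
  then show "(ordstat C x i + ordstat C x (K + i)) / 2 = span_midpoint (sorted_pos C x) K (i - 1)"
    and "(ordstat C x (i - 1) + ordstat C x (K + i - 1)) / 2 = span_midpoint (sorted_pos C x) K (i - 2)"
    by (simp_all add: ordstat_eq_sorted_pos span_midpoint_def add.commute)
qed

lemma limit_event_iff_span_midpoint:
  fixes x :: "nat \<Rightarrow> real"
  assumes "K < C"
  defines "a \<equiv> span_midpoint (sorted_pos C x) K" and "\<kappa> \<equiv> real K / real C"
  shows "limit_event C K x \<longleftrightarrow>
    a 0 \<ge> \<kappa> \<or> a (C - K - 1) \<le> 1 - \<kappa> \<or> (\<exists>i\<in>{2..C - K}. a (i - 1) \<ge> \<kappa> \<and> a (i - 2) \<le> 1 - \<kappa>)"
  unfolding limit_event_def a_def \<kappa>_def ordstat_span_midpoint(1,2)[OF assms(1)]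
  using ordstat_span_midpoint(3,4)[OF assms(1)] by (metis (no_types, lifting))

lemma sorted_pos_eqE:
  assumes "i < C" obtains j where "j < C" "sorted_pos C x i = x j"
proof -
  have "sorted_pos C x i \<in> sorted_pos C x ` {..<C}" using assms by blast
  then show ?thesis unfolding sorted_pos_image using that by auto
qed

lemma eq_sorted_posE:
  assumes "j < C" obtains m where "m < C" "x j = sorted_pos C x m"
proof -
  have "x j \<in> sorted_pos C x ` {..<C}" unfolding sorted_pos_image using assms by blast
  then show ?thesis using that by auto
qed

definition generic_positions :: "nat \<Rightarrow> real \<Rightarrow> (nat \<Rightarrow> real) \<Rightarrow> bool" where
  "generic_positions C \<kappa> x \<longleftrightarrow> (\<forall>j<C. x j \<in> {0..1}) \<and>
     (\<forall>j<C. \<forall>k<C. j \<noteq> k \<longrightarrow> x j \<noteq> x k \<and> x j + x k \<noteq> 2 * \<kappa> \<and> x j + x k \<noteq> 2 - 2 * \<kappa>)"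

lemma generic_positions_inj: "generic_positions C \<kappa> x \<Longrightarrow> inj_on x {..<C}"
  by (auto simp: generic_positions_def inj_on_def)

lemma catchment_setting_sorted_pos:
  assumes generic: "generic_positions C \<kappa> x" and "K < C" "C < 2 * K"
  shows "catchment_setting C (sorted_pos C x) K"
proof -
  interpret increasing_positions C "sorted_pos C x"
    by (rule increasing_positions_sorted_pos[OF generic_positions_inj[OF generic]])
  show ?thesis
  proof unfold_locales
    fix m assume "m < C"
    then obtain j where "j < C" "sorted_pos C x m = x j" by (rule sorted_pos_eqE)
    then show "sorted_pos C x m \<in> {0..1}" using generic by (simp add: generic_positions_def)
  qed (use assms in auto)
qed

lemma span_midpoint_sorted_pos_neq:
  assumes generic: "generic_positions C \<kappa> x" and i: "i + K < C" and K: "0 < K"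
  shows "span_midpoint (sorted_pos C x) K i \<noteq> \<kappa> \<and> span_midpoint (sorted_pos C x) K i \<noteq> 1 - \<kappa>"
proof -
  interpret increasing_positions C "sorted_pos C x"
    by (rule increasing_positions_sorted_pos[OF generic_positions_inj[OF generic]])
  have "i < C" using i by simp
  then obtain j1 where j1: "j1 < C" "sorted_pos C x i = x j1" by (rule sorted_pos_eqE)
  obtain j2 where j2: "j2 < C" "sorted_pos C x (i + K) = x j2" using i by (rule sorted_pos_eqE)
  have "x j1 \<noteq> x j2" using j1 j2 less[of i "i + K"] i K by auto
  then have "x j1 + x j2 \<noteq> 2 * \<kappa> \<and> x j1 + x j2 \<noteq> 2 - 2 * \<kappa>"
    using generic j1(1) j2(1) unfolding generic_positions_def by auto
  then show ?thesis by (auto simp: span_midpoint_def j1 j2)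
qed

lemma span_midpoint_sorted_pos_mono:
  assumes "i \<le> j" "j < C - K"
  shows "span_midpoint (sorted_pos C x) K i \<le> span_midpoint (sorted_pos C x) K j"
proof -
  have "j < C" "j + K < C" using assms by auto
  then show ?thesis using assms sorted_pos_mono[of i j C x] sorted_pos_mono[of "i + K" "j + K" C x]
    by (simp add: span_midpoint_def)
qed

lemma kappa_bounds:
  assumes "K < C" "C < 2 * K"
  shows "1 - real K / real C < real K / real C" "real K / real C < 1"
proof -
  have "real C < 2 * real K" "0 < real C" using assms by linarith+
  then have "1/2 < real K / real C" by (simp add: field_simps)
  then show "1 - real K / real C < real K / real C" by linarith
  show "real K / real C < 1" using assms by simp
qed

lemma measure_catchment_neq_kappa:
  assumes KC: "K < C" "C < 2 * K" and generic: "generic_positions C (real K / real C) x" and j: "j < C"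
  shows "measure lborel (catchment C K x (x j)) \<noteq> real K / real C"
proof -
  interpret catchment_setting C "sorted_pos C x" K by (rule catchment_setting_sorted_pos[OF generic KC])
  obtain m where m: "m < C" "x j = sorted_pos C x m" using eq_sorted_posE[OF j] .
  have "measure lborel (catchment C K (sorted_pos C x) (sorted_pos C x m)) \<noteq> real K / real C"
    using m kappa_bounds[OF KC] span_midpoint_sorted_pos_neq[OF generic] KC
    by (intro measure_catchment_neq) auto
  then show ?thesis
    using m catchment_sorted_pos[OF generic_positions_inj[OF generic]] by simp
qed

lemma card_long_catchments_iff_limit_event:
  assumes KC: "K < C" "C < 2 * K" and generic: "generic_positions C (real K / real C) x"
  shows "K \<le> card {j\<in>{..<C}. measure lborel (catchment C K x (x j)) > real K / real C}
    \<longleftrightarrow> limit_event C K x"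
proof -
  define \<kappa> where "\<kappa> = real K / real C"
  define Y where "Y = sorted_pos C x"
  define a where "a = span_midpoint Y K"
  interpret catchment_setting C Y K unfolding Y_def by (rule catchment_setting_sorted_pos[OF generic KC])
  have inj: "inj_on x {..<C}" by (rule generic_positions_inj[OF generic])
  have "card {j\<in>{..<C}. measure lborel (catchment C K x (x j)) > \<kappa>}
      = card {m\<in>{..<C}. measure lborel (catchment C K Y (Y m)) > \<kappa>}"
    unfolding Y_def catchment_sorted_pos[OF inj]
    using inj inj_on_Y sorted_pos_image[of C x]
    by (intro card_Collect_inj_on_image_eq[symmetric, where P="\<lambda>v. measure lborel (catchment C K x v) > \<kappa>"])
      (auto simp: Y_def)
  then have "K \<le> card {j\<in>{..<C}. measure lborel (catchment C K x (x j)) > \<kappa>}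
      \<longleftrightarrow> (\<forall>i<C - K. a i > \<kappa> \<or> a i < 1 - \<kappa>)"
    using card_long_catchments_iff[OF kappa_bounds[OF KC]] by (simp add: a_def \<kappa>_def)
  also have "\<dots> \<longleftrightarrow> a 0 \<ge> \<kappa> \<or> a (C - K - 1) \<le> 1 - \<kappa> \<or>
      (\<exists>i\<in>{2..C - K}. a (i - 1) \<ge> \<kappa> \<and> a (i - 2) \<le> 1 - \<kappa>)"
  proof (rule mono_avoids_interval_iff)
    show "a i \<le> a j" if "i \<le> j" "j < C - K" for i j
      using that by (simp add: a_def Y_def span_midpoint_sorted_pos_mono)
    show "a i \<noteq> \<kappa> \<and> a i \<noteq> 1 - \<kappa>" if "i < C - K" for i
      using that KC span_midpoint_sorted_pos_neq[OF generic] by (simp add: a_def Y_def \<kappa>_def)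
  qed (use KC in simp)
  also have "\<dots> \<longleftrightarrow> limit_event C K x"
    unfolding limit_event_iff_span_midpoint[OF KC(1)] a_def Y_def \<kappa>_def ..
  finally show ?thesis unfolding \<kappa>_def .
qed

section \<open>Concentration of user counts\<close>

lemma indep_vars_PiM_components:
  assumes M: "prob_space M" and I: "finite I" "I \<noteq> {}"
  shows "prob_space.indep_vars (PiM I (\<lambda>_. M)) (\<lambda>_. M) (\<lambda>i u. u i) I"
proof -
  interpret P: prob_space "PiM I (\<lambda>_. M)" using M by (intro prob_space_PiM)
  have "distr (PiM I (\<lambda>_. M)) (PiM I (\<lambda>_. M)) (\<lambda>u. \<lambda>i\<in>I. u i)
      = distr (PiM I (\<lambda>_. M)) (PiM I (\<lambda>_. M)) (\<lambda>u. u)"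
    by (intro distr_cong) (auto simp: space_PiM PiE_def extensional_restrict)
  also have "\<dots> = PiM I (\<lambda>_. M)" by (rule distr_id)
  also have "\<dots> = (\<Pi>\<^sub>M i\<in>I. distr (PiM I (\<lambda>_. M)) M (\<lambda>u. u i))"
  proof (intro PiM_cong refl)
    show "M = distr (PiM I (\<lambda>_. M)) M (\<lambda>u. u i)" if "i \<in> I" for i
      using that M I by (intro distr_PiM_component[symmetric]) auto
  qed
  finally show ?thesis using I by (subst P.indep_vars_iff_distr_eq_PiM') auto
qed

lemma hoeffding_count_PiM:
  fixes n :: nat
  assumes M: "prob_space M" and B[measurable]: "B \<in> sets M" and n: "0 < n" and \<epsilon>: "0 \<le> \<epsilon>"
  defines "p \<equiv> measure M B"
  shows "measure (PiM {..<n} (\<lambda>_. M))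
           {u\<in>space (PiM {..<n} (\<lambda>_. M)). real (card {i\<in>{..<n}. u i \<in> B}) \<le> real n * p - \<epsilon>}
           \<le> exp (-2 * \<epsilon>\<^sup>2 / n)"
    and "measure (PiM {..<n} (\<lambda>_. M))
           {u\<in>space (PiM {..<n} (\<lambda>_. M)). real (card {i\<in>{..<n}. u i \<in> B}) \<ge> real n * p + \<epsilon>}
           \<le> exp (-2 * \<epsilon>\<^sup>2 / n)"
proof -
  let ?P = "PiM {..<n} (\<lambda>_. M)"
  interpret P: prob_space ?P using M by (intro prob_space_PiM)
  define X where "X = (\<lambda>i (u::nat \<Rightarrow> _). indicator B (u i) :: real)"
  have distr_X: "distr ?P borel (X i) = distr M borel (indicator B)" if "i < n" for i
  proof -
    have "distr ?P borel (X i) = distr (distr ?P M (\<lambda>u. u i)) borel (indicator B)"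
      using B that by (subst distr_distr) (auto simp: X_def comp_def)
    also have "distr ?P M (\<lambda>u. u i) = M"
      using that M by (intro distr_PiM_component) auto
    finally show ?thesis .
  qed
  have "P.expectation (X 0) = integral\<^sup>L (distr ?P M (\<lambda>u. u 0)) (indicator B)"
    using B n by (subst integral_distr) (auto simp: X_def)
  also have "distr ?P M (\<lambda>u. u 0) = M"
    using n M by (intro distr_PiM_component) auto
  also have "integral\<^sup>L M (indicator B) = p"
    using B M by (simp add: p_def prob_space.emeasure_le_1 sets.Int_space_eq2
        finite_measure.emeasure_finite prob_space.finite_measure)
  finally have expectation: "P.expectation (X 0) = p" .
  define Y where "Y = X 0"
  interpret H: Hoeffding_ineq_iid "PiM {..<n} (\<lambda>_. M)" "{..<n}" X Y 0 1 p
  proof unfold_locales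
    show "P.indep_vars (\<lambda>_. borel) X {..<n}"
      unfolding X_def using M B n
      by (intro P.indep_vars_compose2[OF indep_vars_PiM_components]) auto
    show "distr ?P borel (X i) = distr ?P borel Y" if "i \<in> {..<n}" for i
      using distr_X[of i] distr_X[of 0] that n by (simp add: Y_def)
    show "Y \<in> borel_measurable ?P" using B n by (simp add: X_def Y_def)
    show "AE x in ?P. Y x \<in> {0..1}" by (auto simp: X_def Y_def indicator_def)
    show "p \<equiv> P.expectation Y" by (rule eq_reflection) (simp add: expectation Y_def)
  qed simp
  have sum_X: "(\<Sum>i\<in>{..<n}. X i u) = real (card {i\<in>{..<n}. u i \<in> B})" for u
    unfolding X_def indicator_def of_bool_def by (rule real_card_eq_sum_indicator[symmetric]) simp
  show "measure ?P {u\<in>space ?P. real (card {i\<in>{..<n}. u i \<in> B}) \<le> real n * p - \<epsilon>} \<le> exp (-2 * \<epsilon>\<^sup>2 / n)"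
    using H.Hoeffding_ineq_le[OF \<epsilon> zero_less_one] n by (simp add: sum_X lessThan_empty_iff)
  show "measure ?P {u\<in>space ?P. real (card {i\<in>{..<n}. u i \<in> B}) \<ge> real n * p + \<epsilon>} \<le> exp (-2 * \<epsilon>\<^sup>2 / n)"
    using H.Hoeffding_ineq_ge[OF \<epsilon> zero_less_one] n by (simp add: sum_X lessThan_empty_iff)
qed

lemma count_at_least_measurable:
  fixes n :: nat
  assumes [measurable]: "B \<in> sets M"
  shows "{u\<in>space (PiM {..<n} (\<lambda>_. M)). m \<le> card {i\<in>{..<n}. u i \<in> B}} \<in> sets (PiM {..<n} (\<lambda>_. M))"
proof -
  have "m \<le> card {i\<in>{..<n}. u i \<in> B} \<longleftrightarrow> real m \<le> (\<Sum>i\<in>{..<n}. if u i \<in> B then 1 else 0)" for u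
    by (subst real_card_eq_sum_indicator[symmetric]) simp_all
  then have "{u\<in>space (PiM {..<n} (\<lambda>_. M)). m \<le> card {i\<in>{..<n}. u i \<in> B}}
      = {u\<in>space (PiM {..<n} (\<lambda>_. M)). real m \<le> (\<Sum>i\<in>{..<n}. if u i \<in> B then 1 else 0)}"
    by (intro Collect_cong conj_cong refl)
  also have "\<dots> \<in> sets (PiM {..<n} (\<lambda>_. M))" by measurable
  finally show ?thesis .
qed

lemma hoeffding_rate_tendsto_0:
  fixes d c :: real
  assumes "d \<noteq> 0" "c > 0"
  shows "(\<lambda>r::nat. exp (-2 * (real r * d)\<^sup>2 / (real r * c))) \<longlonglongrightarrow> 0"
proof (rule Lim_transform_eventually)
  have "exp (-2 * d\<^sup>2 / c) < 1" using assms by (simp add: divide_neg_pos)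
  then show "(\<lambda>r. exp (-2 * d\<^sup>2 / c) ^ r) \<longlonglongrightarrow> 0" by (intro LIMSEQ_power_zero) simp
  have "exp (-2 * (real r * d)\<^sup>2 / (real r * c)) = exp (-2 * d\<^sup>2 / c) ^ r" if "r > 0" for r
  proof -
    have "-2 * (real r * d)\<^sup>2 / (real r * c) = real r * (-2 * d\<^sup>2 / c)"
      using that by (simp add: power2_eq_square field_simps)
    then show ?thesis by (simp only: exp_of_nat_mult)
  qed
  then show "\<forall>\<^sub>F r in sequentially. exp (-2 * d\<^sup>2 / c) ^ r = exp (-2 * (real r * d)\<^sup>2 / (real r * c))"
    by (intro eventually_sequentiallyI[of 1]) auto
qed

lemma prob_count_at_least_tendsto_1:
  assumes M: "prob_space M" and B[measurable]: "B \<in> sets M" and C: "0 < C" and p: "measure M B > real K / real C"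
  shows "(\<lambda>r. measure (PiM {..<r * C} (\<lambda>_. M))
    {u\<in>space (PiM {..<r * C} (\<lambda>_. M)). r * K \<le> card {i\<in>{..<r * C}. u i \<in> B}}) \<longlonglongrightarrow> 1"
proof -
  define d where "d = real C * measure M B - real K"
  have d: "d > 0" using p C by (simp add: d_def field_simps)
  have lower: "1 - exp (-2 * (real r * d)\<^sup>2 / (real r * C)) \<le> measure (PiM {..<r * C} (\<lambda>_. M))
      {u\<in>space (PiM {..<r * C} (\<lambda>_. M)). r * K \<le> card {i\<in>{..<r * C}. u i \<in> B}}"
    if r: "r > 0" for r :: nat
  proof -
    let ?P = "PiM {..<r * C} (\<lambda>_. M)"
    let ?A = "{u\<in>space ?P. r * K \<le> card {i\<in>{..<r * C}. u i \<in> B}}"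
    interpret P: prob_space ?P using M by (intro prob_space_PiM)
    have "space ?P - ?A \<subseteq>
        {u\<in>space ?P. real (card {i\<in>{..<r * C}. u i \<in> B}) \<le> (r * C) * measure M B - r * d}"
    proof
      fix u assume u: "u \<in> space ?P - ?A"
      then have "\<not> r * K \<le> card {i\<in>{..<r * C}. u i \<in> B}" by simp
      then have "card {i\<in>{..<r * C}. u i \<in> B} < r * K" by (simp only: not_le)
      then have "real (card {i\<in>{..<r * C}. u i \<in> B}) \<le> real (r * K)" by (intro of_nat_mono) simp
      also have "real (r * K) = (r * C) * measure M B - r * d" by (simp add: d_def algebra_simps)
      finally show "u \<in> {u\<in>space ?P. real (card {i\<in>{..<r * C}. u i \<in> B}) \<le> (r * C) * measure M B - r * d}"
        using u by simp
    qed
    then have "measure ?P (space ?P - ?A) \<le>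
        measure ?P {u\<in>space ?P. real (card {i\<in>{..<r * C}. u i \<in> B}) \<le> (r * C) * measure M B - r * d}"
      using B by (intro P.finite_measure_mono) measurable
    also have "\<dots> \<le> exp (-2 * (real r * d)\<^sup>2 / (real r * C))"
      using hoeffding_count_PiM(1)[OF M B _, of "r * C" "r * d"] r C d by simp
    finally have "measure ?P (space ?P - ?A) \<le> exp (-2 * (real r * d)\<^sup>2 / (real r * C))" .
    moreover have "measure ?P (space ?P - ?A) = 1 - measure ?P ?A"
      by (rule P.prob_compl[OF count_at_least_measurable[OF B]])
    ultimately show ?thesis by linarith
  qed
  have "(\<lambda>r. exp (-2 * (real r * d)\<^sup>2 / (real r * C))) \<longlonglongrightarrow> 0"
    using d C by (intro hoeffding_rate_tendsto_0) auto
  then have "(\<lambda>r. 1 - exp (-2 * (real r * d)\<^sup>2 / (real r * C))) \<longlonglongrightarrow> 1 - 0"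
    by (intro tendsto_diff tendsto_const)
  then have lim: "(\<lambda>r. 1 - exp (-2 * (real r * d)\<^sup>2 / (real r * C))) \<longlonglongrightarrow> 1" by simp
  show ?thesis
  proof (rule tendsto_sandwich[OF _ _ lim tendsto_const])
    show "\<forall>\<^sub>F r in sequentially. 1 - exp (-2 * (real r * d)\<^sup>2 / (real r * C)) \<le>
        measure (PiM {..<r * C} (\<lambda>_. M))
        {u\<in>space (PiM {..<r * C} (\<lambda>_. M)). r * K \<le> card {i\<in>{..<r * C}. u i \<in> B}}"
      using lower by (intro eventually_sequentiallyI[of 1]) auto
    show "\<forall>\<^sub>F r in sequentially. measure (PiM {..<r * C} (\<lambda>_. M))
        {u\<in>space (PiM {..<r * C} (\<lambda>_. M)). r * K \<le> card {i\<in>{..<r * C}. u i \<in> B}} \<le> 1"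
      using M by (intro always_eventually allI prob_space.prob_le_1 prob_space_PiM)
  qed
qed

lemma prob_count_at_least_tendsto_0:
  assumes M: "prob_space M" and B[measurable]: "B \<in> sets M" and C: "0 < C" and p: "measure M B < real K / real C"
  shows "(\<lambda>r. measure (PiM {..<r * C} (\<lambda>_. M))
    {u\<in>space (PiM {..<r * C} (\<lambda>_. M)). r * K \<le> card {i\<in>{..<r * C}. u i \<in> B}}) \<longlonglongrightarrow> 0"
proof -
  define d where "d = real K - real C * measure M B"
  have d: "d > 0" using p C by (simp add: d_def field_simps)
  have upper: "measure (PiM {..<r * C} (\<lambda>_. M))
      {u\<in>space (PiM {..<r * C} (\<lambda>_. M)). r * K \<le> card {i\<in>{..<r * C}. u i \<in> B}}
      \<le> exp (-2 * (real r * d)\<^sup>2 / (real r * C))"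
    if r: "r > 0" for r :: nat
  proof -
    let ?P = "PiM {..<r * C} (\<lambda>_. M)"
    interpret P: prob_space ?P using M by (intro prob_space_PiM)
    have "{u\<in>space ?P. r * K \<le> card {i\<in>{..<r * C}. u i \<in> B}} \<subseteq>
        {u\<in>space ?P. real (card {i\<in>{..<r * C}. u i \<in> B}) \<ge> (r * C) * measure M B + r * d}"
    proof
      fix u assume u: "u \<in> {u\<in>space ?P. r * K \<le> card {i\<in>{..<r * C}. u i \<in> B}}"
      have "(r * C) * measure M B + r * d = real (r * K)" by (simp add: d_def algebra_simps)
      also have "\<dots> \<le> real (card {i\<in>{..<r * C}. u i \<in> B})" using u by (intro of_nat_mono) simp
      finally show "u \<in> {u\<in>space ?P. real (card {i\<in>{..<r * C}. u i \<in> B}) \<ge> (r * C) * measure M B + r * d}"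
        using u by simp
    qed
    then have "measure ?P {u\<in>space ?P. r * K \<le> card {i\<in>{..<r * C}. u i \<in> B}} \<le>
        measure ?P {u\<in>space ?P. real (card {i\<in>{..<r * C}. u i \<in> B}) \<ge> (r * C) * measure M B + r * d}"
      using B by (intro P.finite_measure_mono) measurable
    also have "\<dots> \<le> exp (-2 * (real r * d)\<^sup>2 / (real r * C))"
      using hoeffding_count_PiM(2)[OF M B _, of "r * C" "r * d"] r C d by simp
    finally show ?thesis .
  qed
  have lim: "(\<lambda>r. exp (-2 * (real r * d)\<^sup>2 / (real r * C))) \<longlonglongrightarrow> 0"
    using d C by (intro hoeffding_rate_tendsto_0) auto
  show ?thesis
  proof (rule tendsto_sandwich[OF _ _ tendsto_const lim])
    show "\<forall>\<^sub>F r in sequentially. measure (PiM {..<r * C} (\<lambda>_. M))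
        {u\<in>space (PiM {..<r * C} (\<lambda>_. M)). r * K \<le> card {i\<in>{..<r * C}. u i \<in> B}}
        \<le> exp (-2 * (real r * d)\<^sup>2 / (real r * C))"
      using upper by (intro eventually_sequentiallyI[of 1]) auto
  qed simp
qed

section \<open>The stay event\<close>

abbreviation iid_arc :: "nat \<Rightarrow> (nat \<Rightarrow> real \<times> real) measure" where
  "iid_arc n \<equiv> PiM {..<n} (\<lambda>_. arc_unif)"

lemma space_model: "space (model C U) = space (iid_arc U) \<times> space (iid_arc C)"
  unfolding model_def by (simp add: space_pair_measure)

lemma at_least_K_stay_eq_bounded_Ex:
  "at_least_K_stay C K U abar = {w\<in>space (model C U). \<exists>rec\<in>{..<U} \<rightarrow>\<^sub>E Pow {..<C}.
     (\<forall>i\<in>{..<U}. is_UC C K (fst w i) (snd w) (rec i)) \<and>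
     K \<le> card {j\<in>{..<C}. abar \<le> card {i\<in>{..<U}. j \<in> rec i}}}"
proof (intro set_eqI iffI)
  fix w assume "w \<in> at_least_K_stay C K U abar"
  then obtain rec where w: "w \<in> space (model C U)"
    and rec: "\<forall>i<U. is_UC C K (fst w i) (snd w) (rec i)" "K \<le> card {j\<in>{..<C}. abar \<le> card {i\<in>{..<U}. j \<in> rec i}}"
    unfolding at_least_K_stay_def by auto
  have "restrict rec {..<U} \<in> {..<U} \<rightarrow>\<^sub>E Pow {..<C}" using rec(1) by (auto simp: is_UC_def)
  moreover have "{i\<in>{..<U}. j \<in> restrict rec {..<U} i} = {i\<in>{..<U}. j \<in> rec i}" for j by auto
  ultimately show "w \<in> {w\<in>space (model C U). \<exists>rec\<in>{..<U} \<rightarrow>\<^sub>E Pow {..<C}.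
     (\<forall>i\<in>{..<U}. is_UC C K (fst w i) (snd w) (rec i)) \<and>
     K \<le> card {j\<in>{..<C}. abar \<le> card {i\<in>{..<U}. j \<in> rec i}}}"
    using w rec by (intro CollectI conjI bexI[of _ "restrict rec {..<U}"]) auto
next
  fix w assume "w \<in> {w\<in>space (model C U). \<exists>rec\<in>{..<U} \<rightarrow>\<^sub>E Pow {..<C}.
     (\<forall>i\<in>{..<U}. is_UC C K (fst w i) (snd w) (rec i)) \<and>
     K \<le> card {j\<in>{..<C}. abar \<le> card {i\<in>{..<U}. j \<in> rec i}}}"
  then show "w \<in> at_least_K_stay C K U abar"
    unfolding at_least_K_stay_def by (cases w) auto
qed

lemma at_least_K_stay_measurable: "at_least_K_stay C K U abar \<in> sets (model C U)"
proof -
  have inner: "(\<lambda>w. fst w i \<bullet> snd w j) \<in> borel_measurable (model C U)" for i j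
  proof -
    have "(\<lambda>w. fst w i) \<in> borel_measurable (model C U)" "(\<lambda>w. snd w j) \<in> borel_measurable (model C U)"
      unfolding model_def measurable_cong_sets[OF refl sets_arc_unif, symmetric]
      by (rule measurable_compose[OF measurable_fst component_measurable_arc_unif]
          measurable_compose[OF measurable_snd component_measurable_arc_unif])+
    then show ?thesis by (rule borel_measurable_inner)
  qed
  have UC: "{w\<in>space (model C U). is_UC C K (fst w i) (snd w) S} \<in> sets (model C U)" for i S
  proof -
    have alt: "is_UC C K u c S \<longleftrightarrow> S \<in> Pow {..<C} \<and> card S \<le> K \<and>
        (\<forall>T\<in>Pow {..<C}. card T \<le> K \<longrightarrow> (\<Sum>j\<in>T. u \<bullet> c j) \<le> (\<Sum>j\<in>S. u \<bullet> c j))" for u c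
      by (auto simp: is_UC_def)
    have "(\<lambda>w. \<Sum>j\<in>T. fst w i \<bullet> snd w j) \<in> borel_measurable (model C U)" for T
      by (intro borel_measurable_sum inner)
    then show ?thesis unfolding alt by measurable
  qed
  let ?R = "{rec\<in>{..<U} \<rightarrow>\<^sub>E Pow {..<C}. K \<le> card {j\<in>{..<C}. abar \<le> card {i\<in>{..<U}. j \<in> rec i}}}"
  have "finite ?R" by (rule finite_subset[of _ "{..<U} \<rightarrow>\<^sub>E Pow {..<C}"]) (auto intro!: finite_PiE)
  moreover have "at_least_K_stay C K U abar
      = {w\<in>space (model C U). \<exists>rec\<in>?R. \<forall>i\<in>{..<U}. is_UC C K (fst w i) (snd w) (rec i)}"
    unfolding at_least_K_stay_eq_bounded_Ex by blast
  ultimately show ?thesis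
    by (simp only:) (intro sets.sets_Collect_finite_Ex sets.sets_Collect_finite_All UC, auto)
qed

lemma at_least_K_stay_if_surely_recommended:
  assumes uc: "(u, c) \<in> space (model C U)" and G: "G \<subseteq> {..<C}" "K \<le> card G"
    and counts: "\<And>j. j \<in> G \<Longrightarrow> abar \<le> card {i\<in>{..<U}. u i \<in> surely_recommended C K c j}"
  shows "(u, c) \<in> at_least_K_stay C K U abar"
proof -
  define rec where "rec i = (SOME S. is_UC C K (u i) c S)" for i
  have rec: "is_UC C K (u i) c (rec i)" for i
    unfolding rec_def using is_UC_exists by (rule someI_ex)
  have "G \<subseteq> {j\<in>{..<C}. abar \<le> card {i\<in>{..<U}. j \<in> rec i}}"
  proof
    fix j assume j: "j \<in> G"
    have "{i\<in>{..<U}. u i \<in> surely_recommended C K c j} \<subseteq> {i\<in>{..<U}. j \<in> rec i}"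
      using rec unfolding surely_recommended_def by auto
    then have "card {i\<in>{..<U}. u i \<in> surely_recommended C K c j} \<le> card {i\<in>{..<U}. j \<in> rec i}"
      by (intro card_mono) auto
    with counts[OF j] j G show "j \<in> {j\<in>{..<C}. abar \<le> card {i\<in>{..<U}. j \<in> rec i}}" by auto
  qed
  then have "card G \<le> card {j\<in>{..<C}. abar \<le> card {i\<in>{..<U}. j \<in> rec i}}"
    by (intro card_mono) auto
  then have "K \<le> card {j\<in>{..<C}. abar \<le> card {i\<in>{..<U}. j \<in> rec i}}" using G by linarith
  with uc rec show ?thesis unfolding at_least_K_stay_def by blast
qed

lemma at_least_K_stay_imp_possibly_recommended:
  assumes "(u, c) \<in> at_least_K_stay C K U abar" and G: "G \<subseteq> {..<C}" "card G < K"
  shows "\<exists>j\<in>{..<C} - G. abar \<le> card {i\<in>{..<U}. u i \<in> possibly_recommended C K c j}"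
proof -
  obtain rec where rec: "\<forall>i<U. is_UC C K (u i) c (rec i)"
    and many: "K \<le> card {j\<in>{..<C}. abar \<le> card {i\<in>{..<U}. j \<in> rec i}}"
    using assms(1) unfolding at_least_K_stay_def by auto
  have "\<not> {j\<in>{..<C}. abar \<le> card {i\<in>{..<U}. j \<in> rec i}} \<subseteq> G"
  proof
    assume sub: "{j\<in>{..<C}. abar \<le> card {i\<in>{..<U}. j \<in> rec i}} \<subseteq> G"
    have "finite G" using G finite_subset by blast
    with sub have "card {j\<in>{..<C}. abar \<le> card {i\<in>{..<U}. j \<in> rec i}} \<le> card G"
      by (intro card_mono)
    with many G show False by simp
  qed
  then obtain j where j: "j \<in> {..<C} - G" "abar \<le> card {i\<in>{..<U}. j \<in> rec i}" by blast
  have "{i\<in>{..<U}. j \<in> rec i} \<subseteq> {i\<in>{..<U}. u i \<in> possibly_recommended C K c j}"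
    using rec unfolding possibly_recommended_def by auto
  then have "card {i\<in>{..<U}. j \<in> rec i} \<le> card {i\<in>{..<U}. u i \<in> possibly_recommended C K c j}"
    by (intro card_mono) auto
  with j(2) have "abar \<le> card {i\<in>{..<U}. u i \<in> possibly_recommended C K c j}" by linarith
  with j(1) show ?thesis by blast
qed

section \<open>The stay probability given the creators\<close>

definition cond_stay_prob :: "nat \<Rightarrow> nat \<Rightarrow> nat \<Rightarrow> (nat \<Rightarrow> real \<times> real) \<Rightarrow> real" where
  "cond_stay_prob C K r c = measure (iid_arc (r * C))
     {u\<in>space (iid_arc (r * C)). (u, c) \<in> at_least_K_stay C K (r * C) (r * K)}"

lemma cond_stay_prob_set_measurable:
  assumes "c \<in> space (iid_arc C)"
  shows "{u\<in>space (iid_arc U). (u, c) \<in> at_least_K_stay C K U abar} \<in> sets (iid_arc U)"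
proof -
  have "{u\<in>space (iid_arc U). (u, c) \<in> at_least_K_stay C K U abar}
      = (\<lambda>u. (u, c)) -` at_least_K_stay C K U abar \<inter> space (iid_arc U)" by auto
  also have "\<dots> \<in> sets (iid_arc U)"
    using at_least_K_stay_measurable[of C K U abar] assms
    unfolding model_def by (intro measurable_sets[OF measurable_Pair2']) auto
  finally show ?thesis .
qed

lemma cond_stay_prob_tendsto_1:
  assumes c: "c \<in> space (iid_arc C)" and C: "0 < C"
    and G: "G \<subseteq> {..<C}" "K \<le> card G"
    and long: "\<And>j. j \<in> G \<Longrightarrow> measure arc_unif (surely_recommended C K c j) > real K / real C"
  shows "(\<lambda>r. cond_stay_prob C K r c) \<longlonglongrightarrow> 1"
proof -
  define A where "A j r = {u\<in>space (iid_arc (r * C)). r * K \<le> card {i\<in>{..<r * C}. u i \<in> surely_recommended C K c j}}"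
    for j r
  have A: "A j r \<in> sets (iid_arc (r * C))" for j r
    unfolding A_def by (intro count_at_least_measurable) (simp add: surely_recommended_borel)
  have finG: "finite G" using G finite_subset by blast
  have lower: "1 - (\<Sum>j\<in>G. 1 - measure (iid_arc (r * C)) (A j r)) \<le> cond_stay_prob C K r c" for r
  proof -
    interpret P: prob_space "iid_arc (r * C)" by (intro prob_space_PiM prob_space_arc_unif)
    let ?L = "{u\<in>space (iid_arc (r * C)). \<forall>j\<in>G. u \<in> A j r}"
    have L: "?L \<in> sets (iid_arc (r * C))" using A finG by (intro sets.sets_Collect_finite_All) auto
    have "?L \<subseteq> {u\<in>space (iid_arc (r * C)). (u, c) \<in> at_least_K_stay C K (r * C) (r * K)}"
    proof
      fix u assume u: "u \<in> ?L"
      then have "(u, c) \<in> space (model C (r * C))" using c by (simp add: space_model)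
      moreover have "r * K \<le> card {i\<in>{..<r * C}. u i \<in> surely_recommended C K c j}" if "j \<in> G" for j
        using u that by (simp add: A_def)
      ultimately have "(u, c) \<in> at_least_K_stay C K (r * C) (r * K)"
        by (rule at_least_K_stay_if_surely_recommended[OF _ G])
      with u show "u \<in> {u\<in>space (iid_arc (r * C)). (u, c) \<in> at_least_K_stay C K (r * C) (r * K)}" by auto
    qed
    then have "measure (iid_arc (r * C)) ?L \<le> cond_stay_prob C K r c"
      unfolding cond_stay_prob_def using cond_stay_prob_set_measurable[OF c]
      by (intro P.finite_measure_mono) auto
    moreover have "measure (iid_arc (r * C)) (\<Union>j\<in>G. space (iid_arc (r * C)) - A j r)
        \<le> (\<Sum>j\<in>G. measure (iid_arc (r * C)) (space (iid_arc (r * C)) - A j r))"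
      using A finG by (intro P.finite_measure_subadditive_finite) auto
    moreover have "space (iid_arc (r * C)) - ?L = (\<Union>j\<in>G. space (iid_arc (r * C)) - A j r)" by auto
    ultimately show ?thesis
      using P.prob_compl[OF L] P.prob_compl[OF A] by simp
  qed
  have "(\<lambda>r. measure (iid_arc (r * C)) (A j r)) \<longlonglongrightarrow> 1" if "j \<in> G" for j
    unfolding A_def using C long[OF that] surely_recommended_borel
    by (intro prob_count_at_least_tendsto_1 prob_space_arc_unif) simp_all
  then have "(\<lambda>r. 1 - (\<Sum>j\<in>G. 1 - measure (iid_arc (r * C)) (A j r))) \<longlonglongrightarrow> 1 - (\<Sum>j\<in>G. 1 - 1)"
    by (intro tendsto_diff tendsto_sum) auto
  then have lim: "(\<lambda>r. 1 - (\<Sum>j\<in>G. 1 - measure (iid_arc (r * C)) (A j r))) \<longlonglongrightarrow> 1" by simp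
  have "cond_stay_prob C K r c \<le> 1" for r
    unfolding cond_stay_prob_def by (intro prob_space.prob_le_1 prob_space_PiM prob_space_arc_unif)
  then show ?thesis
    using lower by (intro tendsto_sandwich[OF _ _ lim tendsto_const]) auto
qed

lemma cond_stay_prob_tendsto_0:
  assumes c: "c \<in> space (iid_arc C)" and C: "0 < C" and G: "G \<subseteq> {..<C}" "card G < K"
    and short: "\<And>j. j \<in> {..<C} - G \<Longrightarrow> measure arc_unif (possibly_recommended C K c j) < real K / real C"
  shows "(\<lambda>r. cond_stay_prob C K r c) \<longlonglongrightarrow> 0"
proof -
  define B where "B j r = {u\<in>space (iid_arc (r * C)). r * K \<le> card {i\<in>{..<r * C}. u i \<in> possibly_recommended C K c j}}"
    for j r
  have B: "B j r \<in> sets (iid_arc (r * C))" for j r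
    unfolding B_def by (intro count_at_least_measurable) (simp add: possibly_recommended_borel)
  have upper: "cond_stay_prob C K r c \<le> (\<Sum>j\<in>{..<C} - G. measure (iid_arc (r * C)) (B j r))" for r
  proof -
    interpret P: prob_space "iid_arc (r * C)" by (intro prob_space_PiM prob_space_arc_unif)
    have "{u\<in>space (iid_arc (r * C)). (u, c) \<in> at_least_K_stay C K (r * C) (r * K)} \<subseteq> (\<Union>j\<in>{..<C} - G. B j r)"
      using at_least_K_stay_imp_possibly_recommended[OF _ G] unfolding B_def by fastforce
    then have "cond_stay_prob C K r c \<le> measure (iid_arc (r * C)) (\<Union>j\<in>{..<C} - G. B j r)"
      unfolding cond_stay_prob_def using B by (intro P.finite_measure_mono) auto
    also have "\<dots> \<le> (\<Sum>j\<in>{..<C} - G. measure (iid_arc (r * C)) (B j r))"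
      using B by (intro P.finite_measure_subadditive_finite) auto
    finally show ?thesis .
  qed
  have "(\<lambda>r. measure (iid_arc (r * C)) (B j r)) \<longlonglongrightarrow> 0" if "j \<in> {..<C} - G" for j
    unfolding B_def using C short[OF that] possibly_recommended_borel
    by (intro prob_count_at_least_tendsto_0 prob_space_arc_unif) simp_all
  then have "(\<lambda>r. \<Sum>j\<in>{..<C} - G. measure (iid_arc (r * C)) (B j r)) \<longlonglongrightarrow> (\<Sum>j\<in>{..<C} - G. 0)"
    by (intro tendsto_sum) auto
  then have lim: "(\<lambda>r. \<Sum>j\<in>{..<C} - G. measure (iid_arc (r * C)) (B j r)) \<longlonglongrightarrow> 0" by simp
  have "0 \<le> cond_stay_prob C K r c" for r
    unfolding cond_stay_prob_def by simp
  then show ?thesis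
    using upper by (intro tendsto_sandwich[OF _ _ tendsto_const lim]) auto
qed

lemma compose_arc_point_space: "compose {..<C} arc_point x \<in> space (iid_arc C)"
  by (auto simp: space_PiM compose_def)

lemma cond_stay_prob_tendsto_limit_event:
  assumes KC: "K < C" "C < 2 * K" and generic: "generic_positions C (real K / real C) x"
  shows "(\<lambda>r. cond_stay_prob C K r (compose {..<C} arc_point x))
           \<longlonglongrightarrow> (if limit_event C K x then 1 else 0)"
proof -
  define c where "c = compose {..<C} arc_point x"
  define G where "G = {j\<in>{..<C}. measure lborel (catchment C K x (x j)) > real K / real C}"
  have x01: "\<And>j. j < C \<Longrightarrow> x j \<in> {0..1}" using generic by (simp add: generic_positions_def)
  have inj: "inj_on x {..<C}" by (rule generic_positions_inj[OF generic])
  have UC_eq: "is_UC C K u c S = is_UC C K u (\<lambda>k. arc_point (x k)) S" for u S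
    unfolding c_def by (rule is_UC_cong) (simp add: compose_def)
  have recommended_eq: "surely_recommended C K c j = surely_recommended C K (\<lambda>k. arc_point (x k)) j"
    "possibly_recommended C K c j = possibly_recommended C K (\<lambda>k. arc_point (x k)) j" for j
    unfolding surely_recommended_def possibly_recommended_def UC_eq by (rule refl)+
  have c: "c \<in> space (iid_arc C)" unfolding c_def by (rule compose_arc_point_space)
  show ?thesis
  proof (cases "limit_event C K x")
    case True
    then have "K \<le> card G" using card_long_catchments_iff_limit_event[OF KC generic] by (simp add: G_def)
    then have "(\<lambda>r. cond_stay_prob C K r c) \<longlonglongrightarrow> 1"
      using KC c by (intro cond_stay_prob_tendsto_1[of _ _ G])
        (auto simp: G_def recommended_eq measure_recommended_eq_catchment[OF _ x01 inj])
    then show ?thesis using True by (simp add: c_def)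
  next
    case False
    then have "card G < K" using card_long_catchments_iff_limit_event[OF KC generic] by (simp add: G_def)
    moreover have "measure lborel (catchment C K x (x j)) < real K / real C" if "j \<in> {..<C} - G" for j
      using that measure_catchment_neq_kappa[OF KC generic, of j] by (auto simp: G_def)
    ultimately have "(\<lambda>r. cond_stay_prob C K r c) \<longlonglongrightarrow> 0"
      using KC c by (intro cond_stay_prob_tendsto_0[of _ _ G])
        (auto simp: G_def recommended_eq measure_recommended_eq_catchment[OF _ x01 inj])
    then show ?thesis using False by (simp add: c_def)
  qed
qed

section \<open>Averaging over the creators\<close>

lemma measure_pair_measure_eq_integral:
  assumes M1: "prob_space M1" and M2: "prob_space M2" and A: "A \<in> sets (M1 \<Otimes>\<^sub>M M2)"
  shows "measure (M1 \<Otimes>\<^sub>M M2) A = (\<integral>y. measure M1 {x\<in>space M1. (x, y) \<in> A} \<partial>M2)"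
    and "(\<lambda>y. measure M1 {x\<in>space M1. (x, y) \<in> A}) \<in> borel_measurable M2"
proof -
  interpret P1: prob_space M1 by fact
  interpret P2: prob_space M2 by fact
  interpret P: pair_sigma_finite M1 M2 ..
  have section_eq: "(\<lambda>x. (x, y)) -` A = {x\<in>space M1. (x, y) \<in> A}" if "y \<in> space M2" for y
    using sets.sets_into_space[OF A] that by (auto simp: space_pair_measure)
  have "(\<lambda>y. emeasure M1 ((\<lambda>x. (x, y)) -` A)) \<in> borel_measurable M2"
    by (rule P.measurable_emeasure_Pair2[OF A])
  then show meas: "(\<lambda>y. measure M1 {x\<in>space M1. (x, y) \<in> A}) \<in> borel_measurable M2"
    by (subst measurable_cong[where g="\<lambda>y. enn2real (emeasure M1 ((\<lambda>x. (x, y)) -` A))"])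
      (auto simp: section_eq measure_def)
  have "emeasure (M1 \<Otimes>\<^sub>M M2) A = (\<integral>\<^sup>+y. emeasure M1 ((\<lambda>x. (x, y)) -` A) \<partial>M2)"
    by (rule P.emeasure_pair_measure_alt2[OF A])
  also have "\<dots> = (\<integral>\<^sup>+y. ennreal (measure M1 {x\<in>space M1. (x, y) \<in> A}) \<partial>M2)"
    by (intro nn_integral_cong) (simp add: section_eq P1.emeasure_eq_measure)
  also have "\<dots> = ennreal (\<integral>y. measure M1 {x\<in>space M1. (x, y) \<in> A} \<partial>M2)"
    by (rule nn_integral_eq_integral) (auto intro!: P2.integrable_const_bound[where B=1] meas)
  finally show "measure (M1 \<Otimes>\<^sub>M M2) A = (\<integral>y. measure M1 {x\<in>space M1. (x, y) \<in> A} \<partial>M2)"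
    by (simp add: measure_def)
qed

lemma compose_arc_point_measurable: "compose {..<C} arc_point \<in> measurable (ostat_space C) (iid_arc C)"
proof -
  have "(\<lambda>x. \<lambda>i\<in>{..<C}. arc_point (x i)) \<in> measurable (ostat_space C) (iid_arc C)"
    unfolding ostat_space_def
    by (intro measurable_restrict measurable_compose[OF component_measurable_unif01 arc_point_measurable_unif01])
  then show ?thesis by (simp add: compose_def[abs_def])
qed

lemma distr_compose_arc_point: "distr (ostat_space C) (iid_arc C) (compose {..<C} arc_point) = iid_arc C"
proof -
  have "distr (ostat_space C) (iid_arc C) (compose {..<C} arc_point) = PiM {..<C} (\<lambda>i. distr unif01 arc_unif arc_point)"
    unfolding ostat_space_def
    by (rule distr_PiM_finite_prob_space') (auto simp: prob_space_unif01 prob_space_arc_unif arc_point_measurable_unif01)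
  also have "distr unif01 arc_unif arc_point = arc_unif"
    using arc_unif_eq_distr_unif01 by (metis distr_cong sets_arc_unif)
  finally show ?thesis .
qed

lemma stay_prob_eq_integral:
  "measure (model C (r * C)) (at_least_K_stay C K (r * C) (r * K))
     = (\<integral>x. cond_stay_prob C K r (compose {..<C} arc_point x) \<partial>ostat_space C)"
  and cond_stay_prob_measurable: "cond_stay_prob C K r \<in> borel_measurable (iid_arc C)"
proof -
  note fubini = measure_pair_measure_eq_integral[OF prob_space_PiM prob_space_PiM
      at_least_K_stay_measurable[of C K "r * C" "r * K", unfolded model_def], OF prob_space_arc_unif prob_space_arc_unif]
  show meas: "cond_stay_prob C K r \<in> borel_measurable (iid_arc C)"
    using fubini(2) unfolding cond_stay_prob_def[abs_def] .
  have "measure (model C (r * C)) (at_least_K_stay C K (r * C) (r * K)) = (\<integral>c. cond_stay_prob C K r c \<partial>iid_arc C)"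
    using fubini(1) unfolding model_def cond_stay_prob_def .
  also have "\<dots> = (\<integral>c. cond_stay_prob C K r c \<partial>distr (ostat_space C) (iid_arc C) (compose {..<C} arc_point))"
    by (simp only: distr_compose_arc_point)
  also have "\<dots> = (\<integral>x. cond_stay_prob C K r (compose {..<C} arc_point x) \<partial>ostat_space C)"
    by (rule integral_distr[OF compose_arc_point_measurable meas])
  finally show "measure (model C (r * C)) (at_least_K_stay C K (r * C) (r * K))
     = (\<integral>x. cond_stay_prob C K r (compose {..<C} arc_point x) \<partial>ostat_space C)" .
qed

lemma AE_PiM_component_neq:
  fixes f :: "real \<Rightarrow> real"
  assumes M: "prob_space M" and sets_M: "sets M = sets borel" and atomless: "\<And>p. emeasure M {p} = 0"
    and f[measurable]: "f \<in> borel_measurable borel" and I: "finite I" and jk: "j \<in> I" "k \<in> I" "j \<noteq> k"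
  shows "AE x in PiM I (\<lambda>_. M). x j \<noteq> f (x k)"
proof -
  interpret P: product_prob_space "\<lambda>_. M" by (intro product_prob_spaceI M)
  define I' where "I' = I - {j}"
  have I': "I = insert j I'" "finite I'" "j \<notin> I'" "k \<in> I'" using I jk by (auto simp: I'_def)
  define N where "N = {x\<in>space (PiM I (\<lambda>_. M)). x j = f (x k)}"
  have component: "(\<lambda>x. x i) \<in> borel_measurable (PiM I (\<lambda>_. M))" if "i \<in> I" for i
    using measurable_component_singleton[OF that, of "\<lambda>_. M"] unfolding measurable_cong_sets[OF refl sets_M] .
  have N: "N \<in> sets (PiM I (\<lambda>_. M))"
    using component[OF jk(1)] component[OF jk(2)] unfolding N_def by measurable
  have "emeasure (PiM I (\<lambda>_. M)) N = (\<integral>\<^sup>+x. (\<integral>\<^sup>+y. indicator N (x(j := y)) \<partial>M) \<partial>PiM I' (\<lambda>_. M))"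
    using N unfolding I'(1) by (subst P.product_nn_integral_insert[OF I'(2,3), symmetric]) auto
  also have "\<dots> \<le> (\<integral>\<^sup>+x. (\<integral>\<^sup>+y. indicator {f (x k)} y \<partial>M) \<partial>PiM I' (\<lambda>_. M))"
    using jk I' by (intro nn_integral_mono) (auto simp: N_def indicator_def)
  also have "\<dots> = 0" using atomless sets_M by simp
  finally show ?thesis
    by (subst AE_iff_measurable[OF N]) (auto simp: N_def)
qed

lemma AE_generic_positions: "AE x in ostat_space C. generic_positions C \<kappa> x"
proof -
  have unif01_facts: "prob_space unif01" "sets unif01 = sets borel" "\<And>p. emeasure unif01 {p} = 0"
    by (simp_all add: prob_space_unif01 emeasure_unif01_singleton)
  have "AE x in ostat_space C. \<forall>j\<in>{..<C}. x j \<in> {0..1}"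
    unfolding ostat_space_def
  proof (intro AE_finite_allI AE_PiM_component[where P="\<lambda>t. t \<in> {0..1}"])
    show "AE t in unif01. t \<in> {0..1}" unfolding unif01_def by (intro AE_uniform_measureI) auto
  qed (auto simp: prob_space_unif01)
  moreover have "AE x in ostat_space C. \<forall>j\<in>{..<C}. \<forall>k\<in>{..<C}. j \<noteq> k \<longrightarrow>
      x j \<noteq> x k \<and> x j \<noteq> 2 * \<kappa> - x k \<and> x j \<noteq> (2 - 2 * \<kappa>) - x k"
  proof (intro AE_finite_allI)
    fix j k assume jk: "j \<in> {..<C}" "k \<in> {..<C}"
    show "AE x in ostat_space C. j \<noteq> k \<longrightarrow> x j \<noteq> x k \<and> x j \<noteq> 2 * \<kappa> - x k \<and> x j \<noteq> (2 - 2 * \<kappa>) - x k"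
    proof (cases "j = k")
      case False
      have "AE x in ostat_space C. x j \<noteq> (\<lambda>t. t) (x k)"
        and "AE x in ostat_space C. x j \<noteq> (\<lambda>t. 2 * \<kappa> - t) (x k)"
        and "AE x in ostat_space C. x j \<noteq> (\<lambda>t. (2 - 2 * \<kappa>) - t) (x k)"
        unfolding ostat_space_def using jk False by (intro AE_PiM_component_neq unif01_facts; simp)+
      then show ?thesis by eventually_elim auto
    qed simp
  qed auto
  ultimately show ?thesis by eventually_elim (auto simp: generic_positions_def algebra_simps)
qed

lemma limit_event_measurable:
  "{x\<in>space (ostat_space C). limit_event C K x} \<in> sets (ostat_space C)"
  unfolding limit_event_def by measurable

lemma stay_prob_tendsto_limit_event:
  assumes KC: "K < C" "C < 2 * K"
  shows "(\<lambda>r. measure (model C (r * C)) (at_least_K_stay C K (r * C) (r * K)))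
    \<longlonglongrightarrow> measure (ostat_space C) {x\<in>space (ostat_space C). limit_event C K x}"
proof -
  define E where "E = {x\<in>space (ostat_space C). limit_event C K x}"
  interpret P: prob_space "ostat_space C" unfolding ostat_space_def by (intro prob_space_PiM prob_space_unif01)
  have "(\<lambda>r. \<integral>x. cond_stay_prob C K r (compose {..<C} arc_point x) \<partial>ostat_space C)
      \<longlonglongrightarrow> (\<integral>x. indicator E x \<partial>ostat_space C)"
  proof (rule integral_dominated_convergence[where w="\<lambda>_. 1"])
    show "AE x in ostat_space C. (\<lambda>r. cond_stay_prob C K r (compose {..<C} arc_point x)) \<longlonglongrightarrow> indicator E x"
      using AE_space AE_generic_positions[of C "real K / real C"]
    proof eventually_elim
      case (elim x)
      then show ?case
        using cond_stay_prob_tendsto_limit_event[OF KC elim(2)] by (simp add: E_def indicator_def of_bool_def)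
    qed
    show "AE x in ostat_space C. norm (cond_stay_prob C K r (compose {..<C} arc_point x)) \<le> 1" for r
      unfolding cond_stay_prob_def by (auto intro!: prob_space.prob_le_1 prob_space_PiM prob_space_arc_unif)
    show "indicator E \<in> borel_measurable (ostat_space C)"
      unfolding E_def by (intro borel_measurable_indicator limit_event_measurable)
    show "(\<lambda>x. cond_stay_prob C K r (compose {..<C} arc_point x)) \<in> borel_measurable (ostat_space C)" for r
      by (rule measurable_compose[OF compose_arc_point_measurable cond_stay_prob_measurable])
  qed simp
  then show ?thesis
    unfolding stay_prob_eq_integral using limit_event_measurable by (simp add: E_def)
qed

section \<open>Decomposing the limit event\<close>

lemma mono_crossing_exclusive:
  fixes a :: "nat \<Rightarrow> real"
  assumes mono: "\<And>i j. i \<le> j \<Longrightarrow> j < n \<Longrightarrow> a i \<le> a j" and \<kappa>: "1 - \<kappa> < \<kappa>"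
  shows "\<lbrakk>i \<in> {2..n}; j \<in> {2..n}; a (i - 1) \<ge> \<kappa>; a (j - 2) \<le> 1 - \<kappa>\<rbrakk> \<Longrightarrow> j \<le> i"
    and "\<lbrakk>i \<in> {2..n}; a (i - 2) \<le> 1 - \<kappa>\<rbrakk> \<Longrightarrow> \<not> a 0 \<ge> \<kappa>"
    and "\<lbrakk>i \<in> {2..n}; a (i - 1) \<ge> \<kappa>\<rbrakk> \<Longrightarrow> \<not> a (n - 1) \<le> 1 - \<kappa>"
    and "\<lbrakk>1 \<le> n; a 0 \<ge> \<kappa>\<rbrakk> \<Longrightarrow> \<not> a (n - 1) \<le> 1 - \<kappa>"
proof -
  show "j \<le> i" if "i \<in> {2..n}" "j \<in> {2..n}" "a (i - 1) \<ge> \<kappa>" "a (j - 2) \<le> 1 - \<kappa>"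
  proof (rule ccontr)
    assume "\<not> j \<le> i"
    then have "a (i - 1) \<le> a (j - 2)" using that by (intro mono) auto
    with that \<kappa> show False by linarith
  qed
  show "\<not> a 0 \<ge> \<kappa>" if "i \<in> {2..n}" "a (i - 2) \<le> 1 - \<kappa>"
  proof -
    have "i - 2 < n" using that by auto
    then show ?thesis using that mono[of 0 "i - 2"] \<kappa> by linarith
  qed
  show "\<not> a (n - 1) \<le> 1 - \<kappa>" if "i \<in> {2..n}" "a (i - 1) \<ge> \<kappa>"
  proof -
    have "i - 1 \<le> n - 1" "n - 1 < n" using that by auto
    then show ?thesis using that mono[of "i - 1" "n - 1"] \<kappa> by linarith
  qed
  show "\<not> a (n - 1) \<le> 1 - \<kappa>" if "1 \<le> n" "a 0 \<ge> \<kappa>"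
  proof -
    have "n - 1 < n" using that by auto
    then show ?thesis using that mono[of 0 "n - 1"] \<kappa> by linarith
  qed
qed

definition start_event :: "nat \<Rightarrow> nat \<Rightarrow> (nat \<Rightarrow> real) set" where
  "start_event C K = {x \<in> space (ostat_space C).
     (ordstat C x 1 + ordstat C x (K + 1)) / 2 \<ge> real K / real C}"

definition end_event :: "nat \<Rightarrow> nat \<Rightarrow> (nat \<Rightarrow> real) set" where
  "end_event C K = {x \<in> space (ostat_space C).
     (ordstat C x (C - K) + ordstat C x C) / 2 \<le> 1 - real K / real C}"

definition jump_event :: "nat \<Rightarrow> nat \<Rightarrow> nat \<Rightarrow> (nat \<Rightarrow> real) set" where
  "jump_event C K i = {x \<in> space (ostat_space C).
     (ordstat C x i + ordstat C x (K + i)) / 2 \<ge> real K / real C \<and>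
     (ordstat C x (i - 1) + ordstat C x (K + i - 1)) / 2 \<le> 1 - real K / real C}"

lemma limit_event_eq_Un:
  "{x\<in>space (ostat_space C). limit_event C K x}
     = (\<Union>i\<in>{2..C - K}. jump_event C K i) \<union> start_event C K \<union> end_event C K"
  unfolding limit_event_def jump_event_def start_event_def end_event_def by auto

lemma start_end_jump_event_measurable:
  "start_event C K \<in> sets (ostat_space C)" "end_event C K \<in> sets (ostat_space C)"
  "jump_event C K i \<in> sets (ostat_space C)"
  unfolding start_event_def end_event_def jump_event_def by measurable

context
  fixes C K :: nat
  assumes KC: "K < C" "C < 2 * K"
begin

private abbreviation (input) "a x \<equiv> span_midpoint (sorted_pos C x) K"

private lemmas crossing_exclusive =
  mono_crossing_exclusive[where a="a x" and n="C - K" for x,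
    OF span_midpoint_sorted_pos_mono kappa_bounds(1)[OF KC]]

private lemma event_iffs:
  "x \<in> start_event C K \<longleftrightarrow> x \<in> space (ostat_space C) \<and> a x 0 \<ge> real K / real C"
  "x \<in> end_event C K \<longleftrightarrow> x \<in> space (ostat_space C) \<and> a x (C - K - 1) \<le> 1 - real K / real C"
  "i \<in> {2..C - K} \<Longrightarrow> x \<in> jump_event C K i \<longleftrightarrow>
     x \<in> space (ostat_space C) \<and> a x (i - 1) \<ge> real K / real C \<and> a x (i - 2) \<le> 1 - real K / real C"
  unfolding start_event_def end_event_def jump_event_def ordstat_span_midpoint[OF KC(1)] by simp_all

lemma disjoint_family_on_jump_event: "disjoint_family_on (jump_event C K) {2..C - K}"
  unfolding disjoint_family_on_def
proof (intro ballI impI equals0I)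
  fix i j x assume ij: "i \<in> {2..C - K}" "j \<in> {2..C - K}" "i \<noteq> j"
    and "x \<in> jump_event C K i \<inter> jump_event C K j"
  then have "j \<le> i" "i \<le> j"
    using crossing_exclusive(1)[of i j x] crossing_exclusive(1)[of j i x] by (auto simp: event_iffs)
  with ij show False by simp
qed

lemma jump_event_Int_start_event: "(\<Union>i\<in>{2..C - K}. jump_event C K i) \<inter> start_event C K = {}"
proof (rule equals0I)
  fix x assume "x \<in> (\<Union>i\<in>{2..C - K}. jump_event C K i) \<inter> start_event C K"
  then obtain i where "i \<in> {2..C - K}" "x \<in> jump_event C K i" "x \<in> start_event C K" by blast
  then show False using crossing_exclusive(2)[of i x] by (simp add: event_iffs)
qed

lemma jump_event_Un_start_event_Int_end_event:
  "((\<Union>i\<in>{2..C - K}. jump_event C K i) \<union> start_event C K) \<inter> end_event C K = {}"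
proof (rule equals0I)
  fix x assume x: "x \<in> ((\<Union>i\<in>{2..C - K}. jump_event C K i) \<union> start_event C K) \<inter> end_event C K"
  then have at_end: "a x (C - K - 1) \<le> 1 - real K / real C" by (simp add: event_iffs)
  from x consider i where "i \<in> {2..C - K}" "x \<in> jump_event C K i" | "x \<in> start_event C K" by blast
  then show False
  proof cases
    case 1
    then show ?thesis using crossing_exclusive(3)[of i x] at_end by (simp add: event_iffs)
  next
    case 2
    then show ?thesis using crossing_exclusive(4)[of x] at_end KC by (simp add: event_iffs)
  qed
qed

lemma measure_limit_event_eq_sum:
  "measure (ostat_space C) {x\<in>space (ostat_space C). limit_event C K x} =
     (\<Sum>i=2..C - K. measure (ostat_space C) (jump_event C K i))
     + measure (ostat_space C) (start_event C K) + measure (ostat_space C) (end_event C K)"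
proof -
  interpret P: prob_space "ostat_space C" unfolding ostat_space_def by (intro prob_space_PiM prob_space_unif01)
  have "measure (ostat_space C) {x\<in>space (ostat_space C). limit_event C K x}
      = measure (ostat_space C) ((\<Union>i\<in>{2..C - K}. jump_event C K i) \<union> start_event C K)
        + measure (ostat_space C) (end_event C K)"
    unfolding limit_event_eq_Un using start_end_jump_event_measurable jump_event_Un_start_event_Int_end_event
    by (simp add: P.finite_measure_Union sets.finite_UN)
  also have "measure (ostat_space C) ((\<Union>i\<in>{2..C - K}. jump_event C K i) \<union> start_event C K)
      = measure (ostat_space C) (\<Union>i\<in>{2..C - K}. jump_event C K i) + measure (ostat_space C) (start_event C K)"
    using start_end_jump_event_measurable jump_event_Int_start_event by (simp add: P.finite_measure_Union sets.finite_UN)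
  also have "measure (ostat_space C) (\<Union>i\<in>{2..C - K}. jump_event C K i)
      = (\<Sum>i=2..C - K. measure (ostat_space C) (jump_event C K i))"
    using start_end_jump_event_measurable disjoint_family_on_jump_event by (intro P.finite_measure_finite_Union) auto
  finally show ?thesis .
qed

end

theorem lemma14:
  fixes C K :: nat
  assumes "real C / 2 < real K" and "K < C"
  shows "(\<lambda>r::nat. measure (model C (r * C)) (at_least_K_stay C K (r * C) (r * K)))
     \<longlonglongrightarrow>
       (\<Sum>i=2..C-K. measure (ostat_space C)
          {x \<in> space (ostat_space C).
             (ordstat C x i + ordstat C x (K + i)) / 2 \<ge> real K / real C \<and>
             (ordstat C x (i - 1) + ordstat C x (K + i - 1)) / 2 \<le> 1 - real K / real C})
     + measure (ostat_space C)
          {x \<in> space (ostat_space C). (ordstat C x 1 + ordstat C x (K + 1)) / 2 \<ge> real K / real C}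
     + measure (ostat_space C)
          {x \<in> space (ostat_space C). (ordstat C x (C - K) + ordstat C x C) / 2 \<le> 1 - real K / real C}"
proof -
  have KC: "K < C" "C < 2 * K" using assms by linarith+
  show ?thesis
    using stay_prob_tendsto_limit_event[OF KC]
    unfolding measure_limit_event_eq_sum[OF KC] jump_event_def start_event_def end_event_def .
qed

end
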